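(* Let $\mathcal C$ be a single-mixed $\mathsf{B1}$-category satisfying $\Pi_{\mathbf t}=\mathrm{id}_{\mathbf t}$. Then for every map $f\colon A\to\mathbf t$ we have $f+\Pi_A=f$, and dually for every map $g\colon\mathbf f\to B$ we have $g+\amalg_B=g$.
   Context: A *-autonomous category is a symmetric monoidal category $(\mathcal C,\wedge,\mathbf t)$ with natural isomorphisms $\alpha,\sigma$, $\rho_A\colon A\wedge\mathbf t\to A$, $\lambda_A\colon\mathbf t\wedge A\to A$, a contravariant functor $A\mapsto\bar A$ with natural isomorphism $\bar{\bar A}\cong A$, and a natural bijection $\mathrm{Hom}(A\wedge B,C)\cong\mathrm{Hom}(A,\bar B\vee C)$, where $A\vee B:=\overline{\bar B\wedge\bar A}$, $\mathbf f:=\bar{\mathbf t}$; $\vee$ is symmetric monoidal with unit isomorphisms $\check\rho_A\colon A\vee\mathbf f\to A$, $\check\lambda_A\colon\mathbf f\vee A\to A$. Switch maps $s$ are the canonical natural maps $A\wedge(B\vee C)\to(A\wedge B)\vee C$ (and variants via symmetries) obtained by transposition. A $\mathsf{B1}$-category is a *-autonomous category such that (1) there is a Boolean algebra $\mathcal B$ and a function $F$ from objects to $\mathcal B$ with $F(A)\le F(B)$ iff $\mathrm{Hom}(A,B)\ne\emptyset$, and (2) every object $A$ carries a cocommutative $\wedge$-comonoid $\Delta_A\colon A\to A\wedge A$, $\Pi_A\colon A\to\mathbf t$ (coassociative, cocommutative, $\rho_A\circ(A\wedge\Pi_A)\circ\Delta_A=\mathrm{id}_A$). Dually every object carries a commutative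 $\vee$-monoid $\nabla_A\colon A\vee A\to A$, $\amalg_A\colon\mathbf f\to A$ (the duals of $\Delta_{\bar A},\Pi_{\bar A}$). The category is single-mixed if $\Pi_{\mathbf f}=\amalg_{\mathbf t}$; then with $e=\Pi_{\mathbf f}$ set $\mathrm{mix}_{A,B}:=(A\vee\lambda_B)\circ(A\vee(e\wedge B))\circ s\circ(\check\rho_A^{-1}\wedge B)\colon A\wedge B\to A\vee B$, and for $f,g\colon A\to B$ define $f+g:=\nabla_B\circ(f\vee g)\circ\mathrm{mix}_{A,A}\circ\Delta_A$. *)

theory Defs
  imports Main
begin

text \<open>Cmp g f is the composite g after f.
  Tn = tensor (wedge) on objects, TnA on arrows, Tu = unit t,
  Asc A B D : (A*B)*D -> A*(B*D), Sw A B : A*B -> B*A,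
  RU A : A*t -> A, LU A : t*A -> A,
  Ng = negation (bar) on objects, NgA on arrows (contravariant),
  DN A : bar bar A -> A,
  Cur A B D : Hom(A*B, D) -> Hom(A, bar B vee D),
  Dup A : A -> A*A (Delta), Del A : A -> t (Pi).\<close>

record ('o, 'a) sacat =
  Ob  :: "'o set"
  Ar  :: "'a set"
  Dom :: "'a \<Rightarrow> 'o"
  Cod :: "'a \<Rightarrow> 'o"
  Cmp :: "'a \<Rightarrow> 'a \<Rightarrow> 'a"
  IdA :: "'o \<Rightarrow> 'a"
  Tn  :: "'o \<Rightarrow> 'o \<Rightarrow> 'o"
  TnA :: "'a \<Rightarrow> 'a \<Rightarrow> 'a"
  Tu  :: "'o"
  Asc :: "'o \<Rightarrow> 'o \<Rightarrow> 'o \<Rightarrow> 'a"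
  Sw  :: "'o \<Rightarrow> 'o \<Rightarrow> 'a"
  RU  :: "'o \<Rightarrow> 'a"
  LU  :: "'o \<Rightarrow> 'a"
  Ng  :: "'o \<Rightarrow> 'o"
  NgA :: "'a \<Rightarrow> 'a"
  DN  :: "'o \<Rightarrow> 'a"
  Cur :: "'o \<Rightarrow> 'o \<Rightarrow> 'o \<Rightarrow> 'a \<Rightarrow> 'a"
  Dup :: "'o \<Rightarrow> 'a"
  Del :: "'o \<Rightarrow> 'a"

definition hom :: "('o,'a) sacat \<Rightarrow> 'o \<Rightarrow> 'o \<Rightarrow> 'a set" where
  "hom C A B = {f \<in> Ar C. Dom C f = A \<and> Cod C f = B}"

definition isiso :: "('o,'a) sacat \<Rightarrow> 'a \<Rightarrow> bool" where
  "isiso C f \<longleftrightarrow> f \<in> Ar C \<and> (\<exists>g \<in> hom C (Cod C f) (Dom C f).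
      Cmp C g f = IdA C (Dom C f) \<and> Cmp C f g = IdA C (Cod C f))"

definition invA :: "('o,'a) sacat \<Rightarrow> 'a \<Rightarrow> 'a" where
  "invA C f = (THE g. g \<in> hom C (Cod C f) (Dom C f) \<and>
      Cmp C g f = IdA C (Dom C f) \<and> Cmp C f g = IdA C (Cod C f))"

definition Vee :: "('o,'a) sacat \<Rightarrow> 'o \<Rightarrow> 'o \<Rightarrow> 'o" where
  "Vee C A B = Ng C (Tn C (Ng C B) (Ng C A))"

definition VeeA :: "('o,'a) sacat \<Rightarrow> 'a \<Rightarrow> 'a \<Rightarrow> 'a" where
  "VeeA C f g = NgA C (TnA C (NgA C g) (NgA C f))"

definition Fo :: "('o,'a) sacat \<Rightarrow> 'o" where
  "Fo C = Ng C (Tu C)"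

definition category :: "('o,'a) sacat \<Rightarrow> bool" where
  "category C \<longleftrightarrow>
    (\<forall>f \<in> Ar C. Dom C f \<in> Ob C \<and> Cod C f \<in> Ob C) \<and>
    (\<forall>A \<in> Ob C. IdA C A \<in> hom C A A) \<and>
    (\<forall>f \<in> Ar C. \<forall>g \<in> Ar C. Cod C f = Dom C g \<longrightarrow> Cmp C g f \<in> hom C (Dom C f) (Cod C g)) \<and>
    (\<forall>f \<in> Ar C. Cmp C (IdA C (Cod C f)) f = f \<and> Cmp C f (IdA C (Dom C f)) = f) \<and>
    (\<forall>f \<in> Ar C. \<forall>g \<in> Ar C. \<forall>h \<in> Ar C. Cod C f = Dom C g \<and> Cod C g = Dom C h \<longrightarrow>
        Cmp C h (Cmp C g f) = Cmp C (Cmp C h g) f)"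

definition sym_monoidal :: "('o,'a) sacat \<Rightarrow> bool" where
  "sym_monoidal C \<longleftrightarrow> category C \<and>
    Tu C \<in> Ob C \<and>
    (\<forall>A \<in> Ob C. \<forall>B \<in> Ob C. Tn C A B \<in> Ob C) \<and>
    (\<forall>A A' B B' f g. f \<in> hom C A A' \<and> g \<in> hom C B B' \<longrightarrow>
        TnA C f g \<in> hom C (Tn C A B) (Tn C A' B')) \<and>
    (\<forall>A \<in> Ob C. \<forall>B \<in> Ob C. TnA C (IdA C A) (IdA C B) = IdA C (Tn C A B)) \<and>
    (\<forall>f \<in> Ar C. \<forall>f' \<in> Ar C. \<forall>g \<in> Ar C. \<forall>g' \<in> Ar C.
        Cod C f = Dom C f' \<and> Cod C g = Dom C g' \<longrightarrow>
        TnA C (Cmp C f' f) (Cmp C g' g) = Cmp C (TnA C f' g') (TnA C f g)) \<and>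
    \<comment> \<open>associator: natural isomorphism\<close>
    (\<forall>A \<in> Ob C. \<forall>B \<in> Ob C. \<forall>D \<in> Ob C.
        Asc C A B D \<in> hom C (Tn C (Tn C A B) D) (Tn C A (Tn C B D)) \<and> isiso C (Asc C A B D)) \<and>
    (\<forall>f \<in> Ar C. \<forall>g \<in> Ar C. \<forall>h \<in> Ar C.
        Cmp C (Asc C (Cod C f) (Cod C g) (Cod C h)) (TnA C (TnA C f g) h) =
        Cmp C (TnA C f (TnA C g h)) (Asc C (Dom C f) (Dom C g) (Dom C h))) \<and>
    \<comment> \<open>symmetry: natural, self-inverse\<close>
    (\<forall>A \<in> Ob C. \<forall>B \<in> Ob C. Sw C A B \<in> hom C (Tn C A B) (Tn C B A) \<and>
        Cmp C (Sw C B A) (Sw C A B) = IdA C (Tn C A B)) \<and>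
    (\<forall>f \<in> Ar C. \<forall>g \<in> Ar C.
        Cmp C (Sw C (Cod C f) (Cod C g)) (TnA C f g) = Cmp C (TnA C g f) (Sw C (Dom C f) (Dom C g))) \<and>
    \<comment> \<open>unitors: natural isomorphisms\<close>
    (\<forall>A \<in> Ob C. RU C A \<in> hom C (Tn C A (Tu C)) A \<and> isiso C (RU C A) \<and>
        LU C A \<in> hom C (Tn C (Tu C) A) A \<and> isiso C (LU C A)) \<and>
    (\<forall>f \<in> Ar C. Cmp C f (RU C (Dom C f)) = Cmp C (RU C (Cod C f)) (TnA C f (IdA C (Tu C))) \<and>
        Cmp C f (LU C (Dom C f)) = Cmp C (LU C (Cod C f)) (TnA C (IdA C (Tu C)) f)) \<and>
    \<comment> \<open>coherence: pentagon, triangle, hexagon, unit/symmetry\<close>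
    (\<forall>A \<in> Ob C. \<forall>B \<in> Ob C. \<forall>D \<in> Ob C. \<forall>E \<in> Ob C.
        Cmp C (Asc C A B (Tn C D E)) (Asc C (Tn C A B) D E) =
        Cmp C (TnA C (IdA C A) (Asc C B D E))
          (Cmp C (Asc C A (Tn C B D) E) (TnA C (Asc C A B D) (IdA C E)))) \<and>
    (\<forall>A \<in> Ob C. \<forall>B \<in> Ob C.
        Cmp C (TnA C (IdA C A) (LU C B)) (Asc C A (Tu C) B) = TnA C (RU C A) (IdA C B)) \<and>
    (\<forall>A \<in> Ob C. \<forall>B \<in> Ob C. \<forall>D \<in> Ob C.
        Cmp C (Asc C B D A) (Cmp C (Sw C A (Tn C B D)) (Asc C A B D)) =
        Cmp C (TnA C (IdA C B) (Sw C A D))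
          (Cmp C (Asc C B A D) (TnA C (Sw C A B) (IdA C D)))) \<and>
    (\<forall>A \<in> Ob C. RU C A = Cmp C (LU C A) (Sw C A (Tu C)))"

definition star_autonomous :: "('o,'a) sacat \<Rightarrow> bool" where
  "star_autonomous C \<longleftrightarrow> sym_monoidal C \<and>
    \<comment> \<open>contravariant functor A \<mapsto> bar A\<close>
    (\<forall>A \<in> Ob C. Ng C A \<in> Ob C) \<and>
    (\<forall>A B f. f \<in> hom C A B \<longrightarrow> NgA C f \<in> hom C (Ng C B) (Ng C A)) \<and>
    (\<forall>A \<in> Ob C. NgA C (IdA C A) = IdA C (Ng C A)) \<and>
    (\<forall>f \<in> Ar C. \<forall>g \<in> Ar C. Cod C f = Dom C g \<longrightarrow>
        NgA C (Cmp C g f) = Cmp C (NgA C f) (NgA C g)) \<and>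
    \<comment> \<open>natural isomorphism bar bar A \<cong> A\<close>
    (\<forall>A \<in> Ob C. DN C A \<in> hom C (Ng C (Ng C A)) A \<and> isiso C (DN C A)) \<and>
    (\<forall>f \<in> Ar C. Cmp C f (DN C (Dom C f)) = Cmp C (DN C (Cod C f)) (NgA C (NgA C f))) \<and>
    \<comment> \<open>natural bijection Hom(A wedge B, D) \<cong> Hom(A, bar B vee D)\<close>
    (\<forall>A \<in> Ob C. \<forall>B \<in> Ob C. \<forall>D \<in> Ob C.
        bij_betw (Cur C A B D) (hom C (Tn C A B) D) (hom C A (Vee C (Ng C B) D))) \<and>
    (\<forall>A B D A' B' D' a b d h. a \<in> hom C A' A \<and> b \<in> hom C B' B \<and> d \<in> hom C D D' \<and>
        h \<in> hom C (Tn C A B) D \<longrightarrow>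
        Cur C A' B' D' (Cmp C d (Cmp C h (TnA C a b))) =
        Cmp C (VeeA C (NgA C b) d) (Cmp C (Cur C A B D h) a))"

definition B1_category :: "('o,'a) sacat \<Rightarrow> ('o \<Rightarrow> 'b::boolean_algebra) \<Rightarrow> bool" where
  "B1_category C F \<longleftrightarrow> star_autonomous C \<and>
    (\<forall>A \<in> Ob C. \<forall>B \<in> Ob C. F A \<le> F B \<longleftrightarrow> hom C A B \<noteq> {}) \<and>
    (\<forall>A \<in> Ob C. Dup C A \<in> hom C A (Tn C A A) \<and> Del C A \<in> hom C A (Tu C) \<and>
       Cmp C (Asc C A A A) (Cmp C (TnA C (Dup C A) (IdA C A)) (Dup C A)) =
         Cmp C (TnA C (IdA C A) (Dup C A)) (Dup C A) \<and>
       Cmp C (Sw C A A) (Dup C A) = Dup C A \<and>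
       Cmp C (RU C A) (Cmp C (TnA C (IdA C A) (Del C A)) (Dup C A)) = IdA C A)"

text \<open>Dual monoid: nabla_B : B vee B -> B and amalg_B : f -> B.\<close>
definition Nab :: "('o,'a) sacat \<Rightarrow> 'o \<Rightarrow> 'a" where
  "Nab C B = Cmp C (DN C B) (NgA C (Dup C (Ng C B)))"

definition Cou :: "('o,'a) sacat \<Rightarrow> 'o \<Rightarrow> 'a" where
  "Cou C B = Cmp C (DN C B) (NgA C (Del C (Ng C B)))"

text \<open>Unit isomorphism rho-check_A : A vee f -> A (dual of lambda).\<close>
definition RUv :: "('o,'a) sacat \<Rightarrow> 'o \<Rightarrow> 'a" where
  "RUv C A = Cmp C (DN C A)
     (NgA C (Cmp C (TnA C (invA C (DN C (Tu C))) (IdA C (Ng C A))) (invA C (LU C (Ng C A)))))"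

definition ev :: "('o,'a) sacat \<Rightarrow> 'o \<Rightarrow> 'o \<Rightarrow> 'a" where
  "ev C B D = the_inv_into (hom C (Tn C (Vee C (Ng C B) D) B) D)
      (Cur C (Vee C (Ng C B) D) B D) (IdA C (Vee C (Ng C B) D))"

text \<open>Switch map (A vee D) wedge B -> A vee (D wedge B), obtained by transposition.\<close>
definition switch :: "('o,'a) sacat \<Rightarrow> 'o \<Rightarrow> 'o \<Rightarrow> 'o \<Rightarrow> 'a" where
  "switch C A D B =
    (let X = Tn C (Vee C A D) B; nA = Ng C A;
         m1 = Cmp C (invA C (Asc C (Vee C A D) nA B))
                (Cmp C (TnA C (IdA C (Vee C A D)) (Sw C B nA)) (Asc C (Vee C A D) B nA));
         e1 = Cmp C (ev C nA D) (TnA C (VeeA C (invA C (DN C A)) (IdA C D)) (IdA C nA));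
         k = Cmp C (TnA C e1 (IdA C B)) m1
     in Cmp C (VeeA C (DN C A) (IdA C (Tn C D B))) (Cur C X nA (Tn C D B) k))"

definition single_mixed :: "('o,'a) sacat \<Rightarrow> bool" where
  "single_mixed C \<longleftrightarrow> Del C (Fo C) = Cou C (Tu C)"

definition mix :: "('o,'a) sacat \<Rightarrow> 'o \<Rightarrow> 'o \<Rightarrow> 'a" where
  "mix C A B = Cmp C (VeeA C (IdA C A) (LU C B))
     (Cmp C (VeeA C (IdA C A) (TnA C (Del C (Fo C)) (IdA C B)))
       (Cmp C (switch C A (Fo C) B) (TnA C (invA C (RUv C A)) (IdA C B))))"

definition plus :: "('o,'a) sacat \<Rightarrow> 'a \<Rightarrow> 'a \<Rightarrow> 'a" where
  "plus C f g = Cmp C (Nab C (Cod C f))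
     (Cmp C (VeeA C f g) (Cmp C (mix C (Dom C f) (Dom C f)) (Dup C (Dom C f))))"

end

theory Submission
  imports Defs
begin

text \<open>
  Transposing along Hom(A \<and> B, C) \<cong> Hom(A, bar B \<or> C), the map mix_{A,B} is the
  transpose of the map (A \<and> B) \<and> bar A \<rightarrow> B that pairs A with bar A into f and then
  discards the result with e = \<Pi>_f.

  For f : A \<rightarrow> t, naturality of transposition turns f + \<Pi>_A into the transpose of a map
  in which \<Delta>_A is followed by \<Pi>_A on one factor. The counit law removes that copy; what
  is left is f followed by e applied to the pairing of t, and single-mixedness (e = \<amalg>_t)
  together with the dual counit law shows that this is f.

  For g : f \<rightarrow> B, naturality of the unit isomorphism A \<or> f \<cong> A reduces g + \<amalg>_B = g to the
  dual counit law \<nabla>_B \<circ> (B \<or> \<amalg>_B) = (B \<or> f \<cong> B) and to the case g = id_f. Both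
  rest on the fact that every endomorphism of f is a scalar t \<rightarrow> t acting through the unit
  isomorphisms. For id_f it makes the pairing of f factor through the unit, so that the
  counit law applies once more; for the dual counit law it shows that the comparison
  dneg_{bar t} \<circ> bar(dneg_t) on f is the identity, which the axioms do not state.
\<close>

section \<open>Star-autonomous categories\<close>

locale star_autonomous_category =
  fixes C :: "('o, 'a) sacat"
  assumes star_autonomous: "star_autonomous C"
begin

abbreviation comp (infixr "\<cdot>" 55) where "g \<cdot> f \<equiv> Cmp C g f"
abbreviation tensor (infixr "\<otimes>" 60) where "f \<otimes> g \<equiv> TnA C f g"
abbreviation tensor_obj (infixr "\<odot>" 60) where "A \<odot> B \<equiv> Tn C A B"
abbreviation arr where "arr f \<equiv> f \<in> Ar C"
abbreviation obj where "obj A \<equiv> A \<in> Ob C"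
abbreviation dm where "dm f \<equiv> Dom C f"
abbreviation cd where "cd f \<equiv> Cod C f"
abbreviation idt where "idt A \<equiv> IdA C A"
abbreviation tt where "tt \<equiv> Tu C"
abbreviation bar where "bar A \<equiv> Ng C A"
abbreviation barA where "barA f \<equiv> NgA C f"
abbreviation vee where "vee A B \<equiv> Vee C A B"
abbreviation veeA where "veeA f g \<equiv> VeeA C f g"
abbreviation inv\<^sub>C where "inv\<^sub>C f \<equiv> invA C f"
abbreviation assoc where "assoc A B D \<equiv> Asc C A B D"
abbreviation symm where "symm A B \<equiv> Sw C A B"
abbreviation runit where "runit A \<equiv> RU C A"
abbreviation lunit where "lunit A \<equiv> LU C A"
abbreviation dneg where "dneg A \<equiv> DN C A"
abbreviation ff where "ff \<equiv> bar tt"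

lemma sym_monoidal: "sym_monoidal C"
  using star_autonomous unfolding star_autonomous_def by blast

lemma category: "category C"
  using sym_monoidal unfolding sym_monoidal_def by blast

lemma obj_dm [simp]: "arr f \<Longrightarrow> obj (dm f)"
  and obj_cd [simp]: "arr f \<Longrightarrow> obj (cd f)"
  and arr_idt [simp]: "obj A \<Longrightarrow> arr (idt A)"
  and dm_idt [simp]: "obj A \<Longrightarrow> dm (idt A) = A"
  and cd_idt [simp]: "obj A \<Longrightarrow> cd (idt A) = A"
  and arr_comp [simp]: "arr f \<Longrightarrow> arr g \<Longrightarrow> cd f = dm g \<Longrightarrow> arr (g \<cdot> f)"
  and dm_comp [simp]: "arr f \<Longrightarrow> arr g \<Longrightarrow> cd f = dm g \<Longrightarrow> dm (g \<cdot> f) = dm f"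
  and cd_comp [simp]: "arr f \<Longrightarrow> arr g \<Longrightarrow> cd f = dm g \<Longrightarrow> cd (g \<cdot> f) = cd g"
  and comp_idt_left [simp]: "arr f \<Longrightarrow> cd f = B \<Longrightarrow> idt B \<cdot> f = f"
  and comp_idt_right [simp]: "arr f \<Longrightarrow> dm f = A \<Longrightarrow> f \<cdot> idt A = f"
  by (meson category[unfolded category_def hom_def, simplified mem_Collect_eq])+

lemma comp_assoc [simp]:
  "arr f \<Longrightarrow> arr g \<Longrightarrow> arr h \<Longrightarrow> cd f = dm g \<Longrightarrow> cd g = dm h \<Longrightarrow> (h \<cdot> g) \<cdot> f = h \<cdot> (g \<cdot> f)"
  using category unfolding category_def by metis

text \<open>The simplifier keeps composites nested to the right, so an equation between composites
  is only usable as a rewrite rule once it has been precomposed with an arbitrary arrow.\<close>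

lemma comp_reduce:
  assumes "x \<cdot> y = z" "arr x" "arr y" "arr r" "cd y = dm x" "cd r = dm y"
  shows "x \<cdot> (y \<cdot> r) = z \<cdot> r"
  using assms by (metis comp_assoc)

lemma comp_reduce2:
  assumes "x \<cdot> y = z \<cdot> w" "arr x" "arr y" "arr z" "arr w" "arr r"
    and "cd y = dm x" "cd w = dm z" "cd r = dm y"
  shows "x \<cdot> (y \<cdot> r) = z \<cdot> (w \<cdot> r)"
  using assms by (metis comp_assoc dm_comp)

lemma comp_reduce3:
  assumes "x \<cdot> (y \<cdot> z) = u" "arr x" "arr y" "arr z" "arr r"
    and "cd z = dm y" "cd y = dm x" "cd r = dm z"
  shows "x \<cdot> (y \<cdot> (z \<cdot> r)) = u \<cdot> r"
  using assms by (metis arr_comp cd_comp comp_assoc dm_comp)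

lemma obj_tt [simp]: "obj tt"
  and obj_tensor [simp]: "obj A \<Longrightarrow> obj B \<Longrightarrow> obj (A \<odot> B)"
  and tensor_in_hom: "f \<in> hom C A A' \<Longrightarrow> g \<in> hom C B B' \<Longrightarrow> f \<otimes> g \<in> hom C (A \<odot> B) (A' \<odot> B')"
  and tensor_idt [simp]: "obj A \<Longrightarrow> obj B \<Longrightarrow> idt A \<otimes> idt B = idt (A \<odot> B)"
  and interchange: "arr f \<Longrightarrow> arr f' \<Longrightarrow> arr g \<Longrightarrow> arr g' \<Longrightarrow> cd f = dm f' \<Longrightarrow> cd g = dm g' \<Longrightarrow>
    (f' \<cdot> f) \<otimes> (g' \<cdot> g) = (f' \<otimes> g') \<cdot> (f \<otimes> g)"
  by (meson sym_monoidal[unfolded sym_monoidal_def])+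

lemma arr_tensor [simp]: "arr f \<Longrightarrow> arr g \<Longrightarrow> arr (f \<otimes> g)"
  and dm_tensor [simp]: "arr f \<Longrightarrow> arr g \<Longrightarrow> dm (f \<otimes> g) = dm f \<odot> dm g"
  and cd_tensor [simp]: "arr f \<Longrightarrow> arr g \<Longrightarrow> cd (f \<otimes> g) = cd f \<odot> cd g"
  using tensor_in_hom[of f "dm f" "cd f" g "dm g" "cd g"] by (simp_all add: hom_def)

lemma tensor_comp [simp]:
  "arr f \<Longrightarrow> arr f' \<Longrightarrow> arr g \<Longrightarrow> arr g' \<Longrightarrow> cd f = dm f' \<Longrightarrow> cd g = dm g' \<Longrightarrow>
    (f' \<otimes> g') \<cdot> (f \<otimes> g) = (f' \<cdot> f) \<otimes> (g' \<cdot> g)"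
  using interchange by simp

lemma tensor_comp_reduce [simp]:
  "arr f \<Longrightarrow> arr f' \<Longrightarrow> arr g \<Longrightarrow> arr g' \<Longrightarrow> arr r \<Longrightarrow> cd f = dm f' \<Longrightarrow> cd g = dm g' \<Longrightarrow>
    cd r = dm f \<odot> dm g \<Longrightarrow> (f' \<otimes> g') \<cdot> ((f \<otimes> g) \<cdot> r) = ((f' \<cdot> f) \<otimes> (g' \<cdot> g)) \<cdot> r"
  by (subst comp_assoc[symmetric]) auto

lemma assoc_in_hom: "obj A \<Longrightarrow> obj B \<Longrightarrow> obj D \<Longrightarrow>
    assoc A B D \<in> hom C ((A \<odot> B) \<odot> D) (A \<odot> (B \<odot> D)) \<and> isiso C (assoc A B D)"
  and symm_in_hom: "obj A \<Longrightarrow> obj B \<Longrightarrow> symm A B \<in> hom C (A \<odot> B) (B \<odot> A)"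
  and symm_symm [simp]: "obj A \<Longrightarrow> obj B \<Longrightarrow> symm B A \<cdot> symm A B = idt (A \<odot> B)"
  and unit_in_hom: "obj A \<Longrightarrow> runit A \<in> hom C (A \<odot> tt) A \<and> isiso C (runit A) \<and>
    lunit A \<in> hom C (tt \<odot> A) A \<and> isiso C (lunit A)"
  and runit_natural: "arr f \<Longrightarrow> f \<cdot> runit (dm f) = runit (cd f) \<cdot> (f \<otimes> idt tt)"
  and lunit_natural: "arr f \<Longrightarrow> f \<cdot> lunit (dm f) = lunit (cd f) \<cdot> (idt tt \<otimes> f)"
  and pentagon: "obj A \<Longrightarrow> obj B \<Longrightarrow> obj D \<Longrightarrow> obj E \<Longrightarrow>
    assoc A B (D \<odot> E) \<cdot> assoc (A \<odot> B) D E =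
    (idt A \<otimes> assoc B D E) \<cdot> (assoc A (B \<odot> D) E \<cdot> (assoc A B D \<otimes> idt E))"
  and triangle: "obj A \<Longrightarrow> obj B \<Longrightarrow> (idt A \<otimes> lunit B) \<cdot> assoc A tt B = runit A \<otimes> idt B"
  and runit_eq_lunit_symm: "obj A \<Longrightarrow> runit A = lunit A \<cdot> symm A tt"
  by (meson sym_monoidal[unfolded sym_monoidal_def])+

lemma obj_bar [simp]: "obj A \<Longrightarrow> obj (bar A)"
  and barA_in_hom: "f \<in> hom C A B \<Longrightarrow> barA f \<in> hom C (bar B) (bar A)"
  and barA_idt [simp]: "obj A \<Longrightarrow> barA (idt A) = idt (bar A)"
  and barA_comp: "arr f \<Longrightarrow> arr g \<Longrightarrow> cd f = dm g \<Longrightarrow> barA (g \<cdot> f) = barA f \<cdot> barA g"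
  and dneg_in_hom: "obj A \<Longrightarrow> dneg A \<in> hom C (bar (bar A)) A \<and> isiso C (dneg A)"
  and Cur_bij: "obj A \<Longrightarrow> obj B \<Longrightarrow> obj D \<Longrightarrow>
    bij_betw (Cur C A B D) (hom C (A \<odot> B) D) (hom C A (vee (bar B) D))"
  and Cur_natural: "a \<in> hom C A' A \<Longrightarrow> b \<in> hom C B' B \<Longrightarrow> d \<in> hom C D D' \<Longrightarrow>
    h \<in> hom C (A \<odot> B) D \<Longrightarrow>
    Cur C A' B' D' (d \<cdot> (h \<cdot> (a \<otimes> b))) = veeA (barA b) d \<cdot> (Cur C A B D h \<cdot> a)"
  by (meson star_autonomous[unfolded star_autonomous_def])+

lemma assoc_natural:
  "arr f \<Longrightarrow> arr g \<Longrightarrow> arr h \<Longrightarrow> cd f = A \<Longrightarrow> cd g = B \<Longrightarrow> cd h = D \<Longrightarrow>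
    assoc A B D \<cdot> ((f \<otimes> g) \<otimes> h) = (f \<otimes> (g \<otimes> h)) \<cdot> assoc (dm f) (dm g) (dm h)"
  by (hypsubst, meson sym_monoidal[unfolded sym_monoidal_def])

lemma symm_natural:
  "arr f \<Longrightarrow> arr g \<Longrightarrow> cd f = A \<Longrightarrow> cd g = B \<Longrightarrow>
    symm A B \<cdot> (f \<otimes> g) = (g \<otimes> f) \<cdot> symm (dm f) (dm g)"
  by (hypsubst, meson sym_monoidal[unfolded sym_monoidal_def])

lemma dneg_natural: "arr f \<Longrightarrow> cd f = B \<Longrightarrow> f \<cdot> dneg (dm f) = dneg B \<cdot> barA (barA f)"
  by (hypsubst, meson star_autonomous[unfolded star_autonomous_def])

lemma inv_props:
  assumes "isiso C f"
  shows "arr (inv\<^sub>C f) \<and> dm (inv\<^sub>C f) = cd f \<and> cd (inv\<^sub>C f) = dm f \<and>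
    inv\<^sub>C f \<cdot> f = idt (dm f) \<and> f \<cdot> inv\<^sub>C f = idt (cd f)"
proof -
  obtain g where g: "g \<in> hom C (cd f) (dm f)" "g \<cdot> f = idt (dm f)" "f \<cdot> g = idt (cd f)"
    and f: "arr f"
    using assms unfolding isiso_def by blast
  have "g' = g" if "g' \<in> hom C (cd f) (dm f)" "g' \<cdot> f = idt (dm f)" "f \<cdot> g' = idt (cd f)" for g'
  proof -
    have "g' = g' \<cdot> (f \<cdot> g)" using that g by (simp add: hom_def)
    also have "\<dots> = (g' \<cdot> f) \<cdot> g"
      using that g f by (intro comp_assoc[symmetric]) (auto simp: hom_def)
    also have "\<dots> = idt (dm f) \<cdot> g" by (simp only: that(2))
    also have "\<dots> = g" using g by (simp add: hom_def)
    finally show ?thesis .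
  qed
  then have "inv\<^sub>C f = g"
    unfolding invA_def using g by (intro the_equality) blast+
  then show ?thesis using g by (simp add: hom_def)
qed

lemma arr_isiso [simp]: "isiso C f \<Longrightarrow> arr f"
  unfolding isiso_def by blast

lemma arr_inv [simp]: "isiso C f \<Longrightarrow> arr (inv\<^sub>C f)"
  and dm_inv [simp]: "isiso C f \<Longrightarrow> dm (inv\<^sub>C f) = cd f"
  and cd_inv [simp]: "isiso C f \<Longrightarrow> cd (inv\<^sub>C f) = dm f"
  and comp_inv_left [simp]: "isiso C f \<Longrightarrow> dm f = A \<Longrightarrow> inv\<^sub>C f \<cdot> f = idt A"
  and comp_inv_right [simp]: "isiso C f \<Longrightarrow> cd f = B \<Longrightarrow> f \<cdot> inv\<^sub>C f = idt B"
  using inv_props by blast+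

lemma comp_inv_left_reduce [simp]: "isiso C f \<Longrightarrow> arr r \<Longrightarrow> cd r = dm f \<Longrightarrow> inv\<^sub>C f \<cdot> (f \<cdot> r) = r"
  and comp_inv_right_reduce [simp]: "isiso C f \<Longrightarrow> arr r \<Longrightarrow> cd r = cd f \<Longrightarrow> f \<cdot> (inv\<^sub>C f \<cdot> r) = r"
  by (subst comp_assoc[symmetric]; simp)+

lemma isiso_inverse_unique:
  assumes "arr f" "arr g" "dm g = cd f" "cd g = dm f" "g \<cdot> f = idt (dm f)" "f \<cdot> g = idt (cd f)"
  shows "isiso C f" "inv\<^sub>C f = g"
proof -
  show iso: "isiso C f" unfolding isiso_def using assms by (auto simp: hom_def)
  have "inv\<^sub>C f = inv\<^sub>C f \<cdot> (f \<cdot> g)" using assms iso by simp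
  then show "inv\<^sub>C f = g" using assms iso by (subst (asm) comp_assoc[symmetric]) auto
qed

lemma iso_cancel_left:
  "isiso C h \<Longrightarrow> arr x \<Longrightarrow> arr y \<Longrightarrow> cd x = dm h \<Longrightarrow> cd y = dm h \<Longrightarrow> h \<cdot> x = h \<cdot> y \<Longrightarrow> x = y"
  by (metis comp_inv_left_reduce)

lemma iso_cancel_right:
  "isiso C h \<Longrightarrow> arr x \<Longrightarrow> arr y \<Longrightarrow> dm x = cd h \<Longrightarrow> dm y = cd h \<Longrightarrow> x \<cdot> h = y \<cdot> h \<Longrightarrow> x = y"
proof -
  assume a: "isiso C h" "arr x" "arr y" "dm x = cd h" "dm y = cd h" "x \<cdot> h = y \<cdot> h"
  have "x = (x \<cdot> h) \<cdot> inv\<^sub>C h" using a(1-4) by simp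
  also have "\<dots> = y" using a by simp
  finally show "x = y" .
qed

lemma isiso_comp [simp]: "isiso C f \<Longrightarrow> isiso C g \<Longrightarrow> cd f = dm g \<Longrightarrow> isiso C (g \<cdot> f)"
  and inv_comp [simp]: "isiso C f \<Longrightarrow> isiso C g \<Longrightarrow> cd f = dm g \<Longrightarrow> inv\<^sub>C (g \<cdot> f) = inv\<^sub>C f \<cdot> inv\<^sub>C g"
  using isiso_inverse_unique[of "g \<cdot> f" "inv\<^sub>C f \<cdot> inv\<^sub>C g"] by simp_all

lemma isiso_tensor [simp]: "isiso C f \<Longrightarrow> isiso C g \<Longrightarrow> isiso C (f \<otimes> g)"
  and inv_tensor [simp]: "isiso C f \<Longrightarrow> isiso C g \<Longrightarrow> inv\<^sub>C (f \<otimes> g) = inv\<^sub>C f \<otimes> inv\<^sub>C g"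
  using isiso_inverse_unique[of "f \<otimes> g" "inv\<^sub>C f \<otimes> inv\<^sub>C g"] by simp_all

lemma isiso_idt [simp]: "obj A \<Longrightarrow> isiso C (idt A)"
  and inv_idt [simp]: "obj A \<Longrightarrow> inv\<^sub>C (idt A) = idt A"
  using isiso_inverse_unique[of "idt A" "idt A"] by simp_all

lemma isiso_inv [simp]: "isiso C f \<Longrightarrow> isiso C (inv\<^sub>C f)"
  and inv_inv [simp]: "isiso C f \<Longrightarrow> inv\<^sub>C (inv\<^sub>C f) = f"
  using isiso_inverse_unique[of "inv\<^sub>C f" f] by simp_all

lemma inv_natural:
  assumes "isiso C h" "isiso C h'" "arr u" "arr v" "h' \<cdot> u = v \<cdot> h"
    and "cd h = dm v" "cd u = dm h'" "dm u = dm h" "cd v = cd h'"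
  shows "inv\<^sub>C h' \<cdot> v = u \<cdot> inv\<^sub>C h"
proof -
  have "inv\<^sub>C h' \<cdot> v = inv\<^sub>C h' \<cdot> ((v \<cdot> h) \<cdot> inv\<^sub>C h)" using assms by simp
  also have "\<dots> = u \<cdot> inv\<^sub>C h" using assms by (simp flip: assms(5))
  finally show ?thesis .
qed

lemma arr_assoc [simp]: "obj A \<Longrightarrow> obj B \<Longrightarrow> obj D \<Longrightarrow> arr (assoc A B D)"
  and dm_assoc [simp]: "obj A \<Longrightarrow> obj B \<Longrightarrow> obj D \<Longrightarrow> dm (assoc A B D) = (A \<odot> B) \<odot> D"
  and cd_assoc [simp]: "obj A \<Longrightarrow> obj B \<Longrightarrow> obj D \<Longrightarrow> cd (assoc A B D) = A \<odot> (B \<odot> D)"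
  and isiso_assoc [simp]: "obj A \<Longrightarrow> obj B \<Longrightarrow> obj D \<Longrightarrow> isiso C (assoc A B D)"
  using assoc_in_hom by (simp_all add: hom_def)

lemma arr_symm [simp]: "obj A \<Longrightarrow> obj B \<Longrightarrow> arr (symm A B)"
  and dm_symm [simp]: "obj A \<Longrightarrow> obj B \<Longrightarrow> dm (symm A B) = A \<odot> B"
  and cd_symm [simp]: "obj A \<Longrightarrow> obj B \<Longrightarrow> cd (symm A B) = B \<odot> A"
  using symm_in_hom by (simp_all add: hom_def)

lemma symm_symm_reduce [simp]:
  "obj A \<Longrightarrow> obj B \<Longrightarrow> arr r \<Longrightarrow> cd r = A \<odot> B \<Longrightarrow> symm B A \<cdot> (symm A B \<cdot> r) = r"
  by (subst comp_assoc[symmetric]) auto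

lemma isiso_symm [simp]: "obj A \<Longrightarrow> obj B \<Longrightarrow> isiso C (symm A B)"
  and inv_symm [simp]: "obj A \<Longrightarrow> obj B \<Longrightarrow> inv\<^sub>C (symm A B) = symm B A"
  using isiso_inverse_unique[of "symm A B" "symm B A"] by simp_all

lemma arr_runit [simp]: "obj A \<Longrightarrow> arr (runit A)"
  and dm_runit [simp]: "obj A \<Longrightarrow> dm (runit A) = A \<odot> tt"
  and cd_runit [simp]: "obj A \<Longrightarrow> cd (runit A) = A"
  and isiso_runit [simp]: "obj A \<Longrightarrow> isiso C (runit A)"
  and arr_lunit [simp]: "obj A \<Longrightarrow> arr (lunit A)"
  and dm_lunit [simp]: "obj A \<Longrightarrow> dm (lunit A) = tt \<odot> A"
  and cd_lunit [simp]: "obj A \<Longrightarrow> cd (lunit A) = A"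
  and isiso_lunit [simp]: "obj A \<Longrightarrow> isiso C (lunit A)"
  using unit_in_hom by (simp_all add: hom_def)

lemma arr_barA [simp]: "arr f \<Longrightarrow> arr (barA f)"
  and dm_barA [simp]: "arr f \<Longrightarrow> dm (barA f) = bar (cd f)"
  and cd_barA [simp]: "arr f \<Longrightarrow> cd (barA f) = bar (dm f)"
  using barA_in_hom[of f "dm f" "cd f"] by (simp_all add: hom_def)

lemma barA_comp_reduce [simp]:
  "arr f \<Longrightarrow> arr g \<Longrightarrow> cd f = dm g \<Longrightarrow> barA f \<cdot> barA g = barA (g \<cdot> f)"
  "arr f \<Longrightarrow> arr g \<Longrightarrow> arr r \<Longrightarrow> cd f = dm g \<Longrightarrow> cd r = bar (cd g) \<Longrightarrow>
    barA f \<cdot> (barA g \<cdot> r) = barA (g \<cdot> f) \<cdot> r"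
  by (simp add: barA_comp, subst comp_assoc[symmetric], simp_all add: barA_comp)

lemma arr_dneg [simp]: "obj A \<Longrightarrow> arr (dneg A)"
  and dm_dneg [simp]: "obj A \<Longrightarrow> dm (dneg A) = bar (bar A)"
  and cd_dneg [simp]: "obj A \<Longrightarrow> cd (dneg A) = A"
  and isiso_dneg [simp]: "obj A \<Longrightarrow> isiso C (dneg A)"
  using dneg_in_hom by (simp_all add: hom_def)

lemma isiso_barA [simp]: "isiso C f \<Longrightarrow> isiso C (barA f)"
  and inv_barA [simp]: "isiso C f \<Longrightarrow> inv\<^sub>C (barA f) = barA (inv\<^sub>C f)"
  using isiso_inverse_unique[of "barA f" "barA (inv\<^sub>C f)"] by simp_all

declare Vee_def [simp] VeeA_def [simp] Fo_def [simp]

lemma arr_veeA [simp]: "arr f \<Longrightarrow> arr g \<Longrightarrow> arr (veeA f g)"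
  and dm_veeA [simp]: "arr f \<Longrightarrow> arr g \<Longrightarrow> dm (veeA f g) = vee (dm f) (dm g)"
  and cd_veeA [simp]: "arr f \<Longrightarrow> arr g \<Longrightarrow> cd (veeA f g) = vee (cd f) (cd g)"
  by simp_all

lemma Cur_in_hom:
  assumes "arr h" "dm h = A \<odot> B" "obj A" "obj B"
  shows "Cur C A B (cd h) h \<in> hom C A (vee (bar B) (cd h))"
  using bij_betw_apply[OF Cur_bij[of A B "cd h"]] assms by (simp add: hom_def del: Vee_def)

lemma arr_Cur [simp]: "arr h \<Longrightarrow> dm h = A \<odot> B \<Longrightarrow> cd h = D \<Longrightarrow> obj A \<Longrightarrow> obj B \<Longrightarrow> arr (Cur C A B D h)"
  and dm_Cur [simp]: "arr h \<Longrightarrow> dm h = A \<odot> B \<Longrightarrow> cd h = D \<Longrightarrow> obj A \<Longrightarrow> obj B \<Longrightarrow> dm (Cur C A B D h) = A"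
  and cd_Cur [simp]: "arr h \<Longrightarrow> dm h = A \<odot> B \<Longrightarrow> cd h = D \<Longrightarrow> obj A \<Longrightarrow> obj B \<Longrightarrow>
    cd (Cur C A B D h) = vee (bar B) D"
  using Cur_in_hom[of h A B] by (auto simp: hom_def simp del: Vee_def)

lemma Cur_inject:
  "arr h \<Longrightarrow> arr h' \<Longrightarrow> dm h = A \<odot> B \<Longrightarrow> dm h' = A \<odot> B \<Longrightarrow> cd h = D \<Longrightarrow> cd h' = D \<Longrightarrow>
    obj A \<Longrightarrow> obj B \<Longrightarrow> Cur C A B D h = Cur C A B D h' \<Longrightarrow> h = h'"
  using Cur_bij[of A B D] unfolding bij_betw_def inj_on_def by (auto simp: hom_def)

lemma ev_props:
  assumes "obj B" "obj D"
  shows "ev C B D \<in> hom C (vee (bar B) D \<odot> B) D \<and>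
    Cur C (vee (bar B) D) B D (ev C B D) = idt (vee (bar B) D)"
proof -
  let ?V = "vee (bar B) D"
  have bij: "bij_betw (Cur C ?V B D) (hom C (?V \<odot> B) D) (hom C ?V ?V)"
    using Cur_bij[of ?V B D] assms by simp
  moreover have "idt ?V \<in> hom C ?V ?V" using assms by (simp add: hom_def)
  ultimately show ?thesis
    unfolding ev_def bij_betw_def
    using the_inv_into_into[of "Cur C ?V B D"] f_the_inv_into_f[of "Cur C ?V B D"]
    by (simp del: Vee_def)
qed

lemma arr_ev [simp]: "obj B \<Longrightarrow> obj D \<Longrightarrow> arr (ev C B D)"
  and dm_ev [simp]: "obj B \<Longrightarrow> obj D \<Longrightarrow> dm (ev C B D) = vee (bar B) D \<odot> B"
  and cd_ev [simp]: "obj B \<Longrightarrow> obj D \<Longrightarrow> cd (ev C B D) = D"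
  and Cur_ev: "obj B \<Longrightarrow> obj D \<Longrightarrow> Cur C (vee (bar B) D) B D (ev C B D) = idt (vee (bar B) D)"
  using ev_props by (simp_all add: hom_def del: Vee_def)

lemma Cur_natural':
  assumes "arr a" "arr b" "arr d" "arr h" "cd a = A" "cd b = B" "dm d = D" "dm h = A \<odot> B" "cd h = D"
  shows "Cur C (dm a) (dm b) (cd d) (d \<cdot> (h \<cdot> (a \<otimes> b))) = veeA (barA b) d \<cdot> (Cur C A B D h \<cdot> a)"
  using Cur_natural[of a "dm a" A b "dm b" B d D "cd d" h] assms
  by (simp add: hom_def del: Vee_def VeeA_def)

lemma Cur_comp_right:
  assumes "arr a" "arr h" "cd a = A" "dm h = A \<odot> B" "cd h = D" "obj B"
  shows "Cur C (dm a) B D (h \<cdot> (a \<otimes> idt B)) = Cur C A B D h \<cdot> a"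
proof -
  have "obj A" "obj D" using assms by auto
  then show ?thesis using Cur_natural'[of a "idt B" "idt D" h A B D] assms by simp
qed

lemma Cur_comp_left:
  assumes "arr d" "arr h" "dm d = D" "dm h = A \<odot> B" "cd h = D" "obj A" "obj B"
  shows "Cur C A B (cd d) (d \<cdot> h) = veeA (idt (bar B)) d \<cdot> Cur C A B D h"
  using Cur_natural'[of "idt A" "idt B" d h A B D] assms by (simp del: Vee_def VeeA_def)

lemma Cur_comp_tensor_right:
  assumes "arr b" "arr h" "cd b = B" "dm h = A \<odot> B" "cd h = D" "obj A"
  shows "Cur C A (dm b) D (h \<cdot> (idt A \<otimes> b)) = veeA (barA b) (idt D) \<cdot> Cur C A B D h"
proof -
  have "obj B" "obj D" using assms by auto
  then show ?thesis
    using Cur_natural'[of "idt A" b "idt D" h A B D] assms by (simp del: Vee_def VeeA_def)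
qed

section \<open>Unit coherence\<close>

text \<open>The coherence of the unit isomorphisms with the tensor is not among the axioms; it
  follows from the pentagon and the triangle by Kelly's argument, cancelling invertible
  whiskerings.\<close>

lemma tensor_tt_right_cancel:
  assumes "arr x" "arr y" "dm x = dm y" "cd x = cd y" "x \<otimes> idt tt = y \<otimes> idt tt"
  shows "x = y"
proof -
  have expand: "u = runit (cd u) \<cdot> ((u \<otimes> idt tt) \<cdot> inv\<^sub>C (runit (dm u)))" if "arr u" for u
  proof -
    have n: "u \<cdot> runit (dm u) = runit (cd u) \<cdot> (u \<otimes> idt tt)" using runit_natural that by simp
    show ?thesis using that by (simp add: comp_reduce2[OF n[symmetric]])
  qed
  show ?thesis using expand[of x] expand[of y] assms by metis
qed

lemma tensor_tt_left_cancel: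
  assumes "arr x" "arr y" "dm x = dm y" "cd x = cd y" "idt tt \<otimes> x = idt tt \<otimes> y"
  shows "x = y"
proof -
  have expand: "u = lunit (cd u) \<cdot> ((idt tt \<otimes> u) \<cdot> inv\<^sub>C (lunit (dm u)))" if "arr u" for u
  proof -
    have n: "u \<cdot> lunit (dm u) = lunit (cd u) \<cdot> (idt tt \<otimes> u)" using lunit_natural that by simp
    show ?thesis using that by (simp add: comp_reduce2[OF n[symmetric]])
  qed
  show ?thesis using expand[of x] expand[of y] assms by metis
qed

lemma runit_tensor_whiskered:
  assumes obj: "obj A" "obj B" "obj D"
  shows "assoc A B D \<cdot> (runit (A \<odot> B) \<otimes> idt D) =
      assoc A B D \<cdot> (((idt A \<otimes> runit B) \<cdot> assoc A B tt) \<otimes> idt D)"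
proof -
  have a: "(idt (A \<odot> B) \<otimes> lunit D) \<cdot> assoc (A \<odot> B) tt D = runit (A \<odot> B) \<otimes> idt D"
    using triangle obj by simp
  have b: "assoc A B D \<cdot> (idt (A \<odot> B) \<otimes> lunit D) = (idt A \<otimes> (idt B \<otimes> lunit D)) \<cdot> assoc A B (tt \<odot> D)"
    using assoc_natural[of "idt A" "idt B" "lunit D" A B D] obj by simp
  have c: "assoc A B (tt \<odot> D) \<cdot> assoc (A \<odot> B) tt D =
      (idt A \<otimes> assoc B tt D) \<cdot> (assoc A (B \<odot> tt) D \<cdot> (assoc A B tt \<otimes> idt D))"
    using pentagon obj by simp
  have d: "(idt B \<otimes> lunit D) \<cdot> assoc B tt D = runit B \<otimes> idt D" using triangle obj by simp
  have e: "assoc A B D \<cdot> ((idt A \<otimes> runit B) \<otimes> idt D) =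
      (idt A \<otimes> (runit B \<otimes> idt D)) \<cdot> assoc A (B \<odot> tt) D"
    using assoc_natural[of "idt A" "runit B" "idt D" A B D] obj by simp
  have "assoc A B D \<cdot> (runit (A \<odot> B) \<otimes> idt D) =
      assoc A B D \<cdot> ((idt (A \<odot> B) \<otimes> lunit D) \<cdot> assoc (A \<odot> B) tt D)"
    using a by simp
  also have "\<dots> = (assoc A B D \<cdot> (idt (A \<odot> B) \<otimes> lunit D)) \<cdot> assoc (A \<odot> B) tt D" using obj by simp
  also have "\<dots> = (idt A \<otimes> (idt B \<otimes> lunit D)) \<cdot> (assoc A B (tt \<odot> D) \<cdot> assoc (A \<odot> B) tt D)"
    using b obj by simp
  also have "\<dots> =
      (idt A \<otimes> (idt B \<otimes> lunit D)) \<cdot> ((idt A \<otimes> assoc B tt D) \<cdot> (assoc A (B \<odot> tt) D \<cdot> (assoc A B tt \<otimes> idt D)))"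
    using c by simp
  also have "\<dots> =
      (idt A \<otimes> ((idt B \<otimes> lunit D) \<cdot> assoc B tt D)) \<cdot> (assoc A (B \<odot> tt) D \<cdot> (assoc A B tt \<otimes> idt D))"
    using obj by simp
  also have "\<dots> = ((idt A \<otimes> (runit B \<otimes> idt D)) \<cdot> assoc A (B \<odot> tt) D) \<cdot> (assoc A B tt \<otimes> idt D)"
    using d obj by simp
  also have "\<dots> = assoc A B D \<cdot> (((idt A \<otimes> runit B) \<cdot> assoc A B tt) \<otimes> idt D)"
    using obj by (simp add: comp_reduce2[OF e[symmetric]])
  finally show ?thesis .
qed

lemma runit_tensor: "obj A \<Longrightarrow> obj B \<Longrightarrow> runit (A \<odot> B) = (idt A \<otimes> runit B) \<cdot> assoc A B tt"
proof -
  assume obj: "obj A" "obj B"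
  have "runit (A \<odot> B) \<otimes> idt tt = ((idt A \<otimes> runit B) \<cdot> assoc A B tt) \<otimes> idt tt"
    using iso_cancel_left[of "assoc A B tt" "runit (A \<odot> B) \<otimes> idt tt" "((idt A \<otimes> runit B) \<cdot> assoc A B tt) \<otimes> idt tt"]
      runit_tensor_whiskered[of A B tt] obj by simp
  then show ?thesis using tensor_tt_right_cancel obj by simp
qed

lemma lunit_tensor:
  assumes obj: "obj B" "obj D"
  shows "lunit (B \<odot> D) \<cdot> assoc tt B D = lunit B \<otimes> idt D"
proof -
  define A where "A = tt"
  have obA: "obj A" by (simp add: A_def)
  define P where "P = assoc A (tt \<odot> B) D \<cdot> (assoc A tt B \<otimes> idt D)"
  have pent: "assoc A tt (B \<odot> D) \<cdot> assoc (A \<odot> tt) B D =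
      (idt A \<otimes> assoc tt B D) \<cdot> (assoc A (tt \<odot> B) D \<cdot> (assoc A tt B \<otimes> idt D))"
    using pentagon obj obA by simp
  have tri1: "(idt A \<otimes> lunit (B \<odot> D)) \<cdot> assoc A tt (B \<odot> D) = runit A \<otimes> idt (B \<odot> D)"
    using triangle obj obA by simp
  have nat1: "assoc A B D \<cdot> ((runit A \<otimes> idt B) \<otimes> idt D) =
      (runit A \<otimes> idt (B \<odot> D)) \<cdot> assoc (A \<odot> tt) B D"
    using assoc_natural[of "runit A" "idt B" "idt D" A B D] obj obA by simp
  have tri2: "(idt A \<otimes> lunit B) \<cdot> assoc A tt B = runit A \<otimes> idt B" using triangle obj obA by simp
  have nat2: "assoc A B D \<cdot> ((idt A \<otimes> lunit B) \<otimes> idt D) =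
      (idt A \<otimes> (lunit B \<otimes> idt D)) \<cdot> assoc A (tt \<odot> B) D"
    using assoc_natural[of "idt A" "lunit B" "idt D" A B D] obj obA by simp
  have "(idt A \<otimes> (lunit (B \<odot> D) \<cdot> assoc tt B D)) \<cdot> P =
      (idt A \<otimes> lunit (B \<odot> D)) \<cdot> (assoc A tt (B \<odot> D) \<cdot> assoc (A \<odot> tt) B D)"
    unfolding P_def using obj obA by (simp add: pent comp_reduce2[OF pent])
  also have "\<dots> = (runit A \<otimes> idt (B \<odot> D)) \<cdot> assoc (A \<odot> tt) B D"
    using obj obA by (simp add: tri1 comp_reduce[OF tri1])
  also have "\<dots> = assoc A B D \<cdot> ((runit A \<otimes> idt B) \<otimes> idt D)" using nat1 by simp
  also have "\<dots> = assoc A B D \<cdot> (((idt A \<otimes> lunit B) \<cdot> assoc A tt B) \<otimes> idt D)" using tri2 by simp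
  also have "\<dots> = (idt A \<otimes> (lunit B \<otimes> idt D)) \<cdot> P"
    unfolding P_def using obj obA by (simp add: nat2[symmetric] comp_reduce2[OF nat2[symmetric]])
  finally have eq: "(idt A \<otimes> (lunit (B \<odot> D) \<cdot> assoc tt B D)) \<cdot> P =
      (idt A \<otimes> (lunit B \<otimes> idt D)) \<cdot> P" .
  have "isiso C P" unfolding P_def using obj obA by simp
  then have "idt A \<otimes> (lunit (B \<odot> D) \<cdot> assoc tt B D) = idt A \<otimes> (lunit B \<otimes> idt D)"
    using iso_cancel_right[OF _ _ _ _ _ eq] obj obA unfolding P_def by simp
  then show ?thesis using tensor_tt_left_cancel obj unfolding A_def by simp
qed

lemma lunit_tt: "lunit tt = runit tt"
proof -
  have a: "(idt tt \<otimes> lunit tt) \<cdot> assoc tt tt tt = runit tt \<otimes> idt tt" using triangle by simp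
  have b: "lunit (tt \<odot> tt) \<cdot> assoc tt tt tt = lunit tt \<otimes> idt tt" using lunit_tensor by simp
  have c: "idt tt \<otimes> lunit tt = lunit (tt \<odot> tt)"
  proof -
    have "lunit tt \<cdot> (idt tt \<otimes> lunit tt) = lunit tt \<cdot> lunit (tt \<odot> tt)"
      using lunit_natural[of "lunit tt"] by simp
    then show ?thesis using iso_cancel_left[of "lunit tt" "idt tt \<otimes> lunit tt" "lunit (tt \<odot> tt)"] by simp
  qed
  have "runit tt \<otimes> idt tt = lunit tt \<otimes> idt tt" using a b c by simp
  then show ?thesis using tensor_tt_right_cancel by simp
qed

lemma inv_assoc_natural: "arr f \<Longrightarrow> arr g \<Longrightarrow> arr h \<Longrightarrow> cd f = A \<Longrightarrow> cd g = B \<Longrightarrow> cd h = D \<Longrightarrow>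
   inv\<^sub>C (assoc A B D) \<cdot> (f \<otimes> (g \<otimes> h)) = ((f \<otimes> g) \<otimes> h) \<cdot> inv\<^sub>C (assoc (dm f) (dm g) (dm h))"
  by (rule inv_natural) (auto simp: assoc_natural)

lemma inv_lunit_natural: "arr g \<Longrightarrow> cd g = B \<Longrightarrow> inv\<^sub>C (lunit B) \<cdot> g =
    (idt tt \<otimes> g) \<cdot> inv\<^sub>C (lunit (dm g))"
  by (rule inv_natural) (auto simp: lunit_natural)

lemma inv_runit_natural: "arr g \<Longrightarrow> cd g = B \<Longrightarrow> inv\<^sub>C (runit B) \<cdot> g =
    (g \<otimes> idt tt) \<cdot> inv\<^sub>C (runit (dm g))"
  by (rule inv_natural) (auto simp: runit_natural)

definition shuffle :: "'o \<Rightarrow> 'o \<Rightarrow> 'o \<Rightarrow> 'a" where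
  "shuffle X Y Z = inv\<^sub>C (assoc X Z Y) \<cdot> ((idt X \<otimes> symm Y Z) \<cdot> assoc X Y Z)"

lemma arr_shuffle [simp]: "obj X \<Longrightarrow> obj Y \<Longrightarrow> obj Z \<Longrightarrow> arr (shuffle X Y Z)"
  and dm_shuffle [simp]: "obj X \<Longrightarrow> obj Y \<Longrightarrow> obj Z \<Longrightarrow> dm (shuffle X Y Z) = (X \<odot> Y) \<odot> Z"
  and cd_shuffle [simp]: "obj X \<Longrightarrow> obj Y \<Longrightarrow> obj Z \<Longrightarrow> cd (shuffle X Y Z) = (X \<odot> Z) \<odot> Y"
  unfolding shuffle_def by simp_all

lemma shuffle_natural: "arr x \<Longrightarrow> arr y \<Longrightarrow> arr z \<Longrightarrow> cd x = X' \<Longrightarrow> cd y = Y' \<Longrightarrow> cd z = Z' \<Longrightarrow>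
  shuffle X' Y' Z' \<cdot> ((x \<otimes> y) \<otimes> z) = ((x \<otimes> z) \<otimes> y) \<cdot> shuffle (dm x) (dm y) (dm z)"
proof -
  assume a0: "arr x" "arr y" "arr z" "cd x = X'" "cd y = Y'" "cd z = Z'"
  then have "obj X'" "obj Y'" "obj Z'" by auto
  note a = a0 this
  have e1: "assoc X' Y' Z' \<cdot> ((x \<otimes> y) \<otimes> z) = (x \<otimes> (y \<otimes> z)) \<cdot> assoc (dm x) (dm y) (dm z)"
    using assoc_natural a by blast
  have e2: "symm Y' Z' \<cdot> (y \<otimes> z) = (z \<otimes> y) \<cdot> symm (dm y) (dm z)" using symm_natural a by blast
  have e3: "inv\<^sub>C (assoc X' Z' Y') \<cdot> (x \<otimes> (z \<otimes> y)) =
      ((x \<otimes> z) \<otimes> y) \<cdot> inv\<^sub>C (assoc (dm x) (dm z) (dm y))"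
    using inv_assoc_natural a by blast
  have "shuffle X' Y' Z' \<cdot> ((x \<otimes> y) \<otimes> z) =
      inv\<^sub>C (assoc X' Z' Y') \<cdot> ((idt X' \<otimes> symm Y' Z') \<cdot> ((x \<otimes> (y \<otimes> z)) \<cdot> assoc (dm x) (dm y) (dm z)))"
    unfolding shuffle_def using a by (simp add: e1 comp_reduce2[OF e1])
  also have "\<dots> =
      inv\<^sub>C (assoc X' Z' Y') \<cdot> ((x \<otimes> (z \<otimes> y)) \<cdot> ((idt (dm x) \<otimes> symm (dm y) (dm z)) \<cdot> assoc (dm x) (dm y) (dm z)))"
    using a by (simp add: e2)
  also have "\<dots> = ((x \<otimes> z) \<otimes> y) \<cdot> shuffle (dm x) (dm y) (dm z)"
    unfolding shuffle_def using a by (simp del: tensor_comp tensor_comp_reduce add: e3 comp_reduce2[OF e3])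
  finally show ?thesis .
qed

lemma runit_symm: "obj W \<Longrightarrow> runit W \<cdot> symm tt W = lunit W"
proof -
  assume w: "obj W"
  have "runit W \<cdot> symm tt W = (lunit W \<cdot> symm W tt) \<cdot> symm tt W" using runit_eq_lunit_symm w by simp
  also have "\<dots> = lunit W" using w by simp
  finally show ?thesis .
qed

lemma shuffle_runit_cancel:
  assumes "arr G" "dm G = (X \<odot> W)" "cd G = tt" "obj X" "obj W"
  shows "lunit tt \<cdot> ((G \<otimes> idt tt) \<cdot> (shuffle X tt W \<cdot> (inv\<^sub>C (runit X) \<otimes> idt W))) = G"
proof -
  have n: "runit tt \<cdot> (G \<otimes> idt tt) = G \<cdot> runit (X \<odot> W)" using runit_natural[of G] assms by simp
  have k2: "runit (X \<odot> W) = (idt X \<otimes> runit W) \<cdot> assoc X W tt" using runit_tensor assms by simp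
  have tri: "(idt X \<otimes> lunit W) \<cdot> assoc X tt W = runit X \<otimes> idt W" using triangle assms by simp
  have "lunit tt \<cdot> ((G \<otimes> idt tt) \<cdot> (shuffle X tt W \<cdot> (inv\<^sub>C (runit X) \<otimes> idt W)))
     = G \<cdot> (runit (X \<odot> W) \<cdot> (shuffle X tt W \<cdot> (inv\<^sub>C (runit X) \<otimes> idt W)))"
    using assms by (simp add: lunit_tt n comp_reduce2[OF n])
  also have "\<dots> = G \<cdot> ((idt X \<otimes> (runit W \<cdot> symm tt W)) \<cdot> (assoc X tt W \<cdot> (inv\<^sub>C (runit X) \<otimes> idt W)))"
    unfolding k2 shuffle_def using assms by simp
  also have "\<dots> = G \<cdot> ((runit X \<otimes> idt W) \<cdot> (inv\<^sub>C (runit X) \<otimes> idt W))"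
    using assms by (simp add: runit_symm tri comp_reduce[OF tri])
  also have "\<dots> = G" using assms by simp
  finally show ?thesis .
qed

lemma shuffle_unit_unit:
  assumes "obj Y"
  shows "lunit Y \<cdot> ((runit tt \<otimes> idt Y) \<cdot> shuffle tt Y tt) = runit Y \<cdot> (lunit Y \<otimes> idt tt)"
proof -
  have t1: "lunit (tt \<odot> Y) \<cdot> assoc tt tt Y = lunit tt \<otimes> idt Y" using lunit_tensor assms by simp
  have t1': "(lunit tt \<otimes> idt Y) \<cdot> inv\<^sub>C (assoc tt tt Y) = lunit (tt \<odot> Y)"
  proof -
    have "(lunit tt \<otimes> idt Y) \<cdot> inv\<^sub>C (assoc tt tt Y) =
        (lunit (tt \<odot> Y) \<cdot> assoc tt tt Y) \<cdot> inv\<^sub>C (assoc tt tt Y)"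
      using t1 by simp
    also have "\<dots> = lunit (tt \<odot> Y)" using assms by simp
    finally show ?thesis .
  qed
  have t2: "lunit (Y \<odot> tt) \<cdot> assoc tt Y tt = lunit Y \<otimes> idt tt" using lunit_tensor assms by simp
  have n: "symm Y tt \<cdot> lunit (Y \<odot> tt) = lunit (tt \<odot> Y) \<cdot> (idt tt \<otimes> symm Y tt)"
    using lunit_natural[of "symm Y tt"] assms by simp
  have "lunit Y \<cdot> ((runit tt \<otimes> idt Y) \<cdot> shuffle tt Y tt) =
      lunit Y \<cdot> (lunit (tt \<odot> Y) \<cdot> ((idt tt \<otimes> symm Y tt) \<cdot> assoc tt Y tt))"
    unfolding shuffle_def using assms by (simp add: lunit_tt[symmetric] t1' comp_reduce[OF t1'])
  also have "\<dots> = lunit Y \<cdot> (symm Y tt \<cdot> (lunit Y \<otimes> idt tt))"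
    using assms by (simp add: n[symmetric] comp_reduce2[OF n[symmetric]] t2)
  also have "\<dots> = runit Y \<cdot> (lunit Y \<otimes> idt tt)" using assms by (simp add: runit_eq_lunit_symm)
  finally show ?thesis .
qed

section \<open>Negation and scalars\<close>

lemma dneg_expand: "arr x \<Longrightarrow> x = dneg (cd x) \<cdot> (barA (barA x) \<cdot> inv\<^sub>C (dneg (dm x)))"
proof -
  assume x: "arr x"
  have "x = (x \<cdot> dneg (dm x)) \<cdot> inv\<^sub>C (dneg (dm x))" using x by simp
  also have "\<dots> = dneg (cd x) \<cdot> (barA (barA x) \<cdot> inv\<^sub>C (dneg (dm x)))"
    using x by (simp only: dneg_natural[OF x refl]) simp
  finally show ?thesis .
qed

lemma barA_faithful:
  "arr a \<Longrightarrow> arr b \<Longrightarrow> dm a = dm b \<Longrightarrow> cd a = cd b \<Longrightarrow> barA a = barA b \<Longrightarrow> a = b"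
  using dneg_expand by metis

lemma barA_full:
  assumes "arr \<phi>" "dm \<phi> = bar Y" "cd \<phi> = bar X" "obj X" "obj Y"
  obtains x where "arr x" "dm x = X" "cd x = Y" "barA x = \<phi>"
proof -
  define x where "x = dneg Y \<cdot> (barA \<phi> \<cdot> inv\<^sub>C (dneg X))"
  have x: "arr x" "dm x = X" "cd x = Y" unfolding x_def using assms by simp_all
  have "barA (barA x) = inv\<^sub>C (dneg Y) \<cdot> (x \<cdot> dneg X)"
    using dneg_natural[of x Y] x assms by simp
  also have "\<dots> = barA \<phi>" unfolding x_def using assms by simp
  finally have "barA x = \<phi>" using barA_faithful[of "barA x" \<phi>] x assms by simp
  with x that show thesis by blast
qed

lemma inv_dneg_natural: "arr g \<Longrightarrow> cd g = B \<Longrightarrow> inv\<^sub>C (dneg B) \<cdot> g = barA (barA g) \<cdot> inv\<^sub>C (dneg (dm g))"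
  by (rule inv_natural) (auto simp: dneg_natural)

lemma arr_RUv [simp]: "obj A \<Longrightarrow> arr (RUv C A)"
  and dm_RUv [simp]: "obj A \<Longrightarrow> dm (RUv C A) = vee A ff"
  and cd_RUv [simp]: "obj A \<Longrightarrow> cd (RUv C A) = A"
  and isiso_RUv [simp]: "obj A \<Longrightarrow> isiso C (RUv C A)"
  unfolding RUv_def by simp_all

lemma RUv_natural: "arr x \<Longrightarrow> dm x = A \<Longrightarrow> cd x = A' \<Longrightarrow> RUv C A' \<cdot> veeA x (idt ff) = x \<cdot> RUv C A"
proof -
  assume a0: "arr x" "dm x = A" "cd x = A'"
  then have "obj A" "obj A'" by auto
  note a = a0 this
  have n1: "x \<cdot> dneg A = dneg A' \<cdot> barA (barA x)" using dneg_natural a by blast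
  have n2: "inv\<^sub>C (lunit (bar A)) \<cdot> barA x = (idt tt \<otimes> barA x) \<cdot> inv\<^sub>C (lunit (bar A'))"
    using inv_lunit_natural[of "barA x" "bar A"] a by simp
  show ?thesis unfolding RUv_def using a
    by (simp add: n1 comp_reduce2[OF n1] n2 comp_reduce2[OF n2])
qed

definition scal :: "'o \<Rightarrow> 'a \<Rightarrow> 'a" where
  "scal X c = runit X \<cdot> ((idt X \<otimes> c) \<cdot> inv\<^sub>C (runit X))"

abbreviation scalar :: "'a \<Rightarrow> bool" where
  "scalar c \<equiv> arr c \<and> dm c = tt \<and> cd c = tt"

lemma arr_scal [simp]: "obj X \<Longrightarrow> scalar c \<Longrightarrow> arr (scal X c)"
  and dm_scal [simp]: "obj X \<Longrightarrow> scalar c \<Longrightarrow> dm (scal X c) = X"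
  and cd_scal [simp]: "obj X \<Longrightarrow> scalar c \<Longrightarrow> cd (scal X c) = X"
  unfolding scal_def by simp_all

lemma scal_natural: "arr x \<Longrightarrow> dm x = X \<Longrightarrow> cd x = Y \<Longrightarrow> scalar c \<Longrightarrow> x \<cdot> scal X c = scal Y c \<cdot> x"
proof -
  assume a0: "arr x" "dm x = X" "cd x = Y" "scalar c"
  then have "obj X" "obj Y" by auto
  note a = a0 this
  have n1: "x \<cdot> runit X = runit Y \<cdot> (x \<otimes> idt tt)" using runit_natural[of x] a by simp
  have n2: "inv\<^sub>C (runit Y) \<cdot> x = (x \<otimes> idt tt) \<cdot> inv\<^sub>C (runit X)"
    using inv_runit_natural[of x Y] a by simp
  show ?thesis unfolding scal_def using a by (simp add: n1 comp_reduce2[OF n1] n2)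
qed

lemma scal_tt: "scalar c \<Longrightarrow> scal tt c = c"
proof -
  assume a: "scalar c"
  have n: "c \<cdot> lunit tt = lunit tt \<cdot> (idt tt \<otimes> c)" using lunit_natural[of c] a by simp
  show ?thesis unfolding scal_def lunit_tt[symmetric] using a by (simp add: n[symmetric] comp_reduce2[OF n[symmetric]])
qed

lemma tensor_idt_scal: "obj A \<Longrightarrow> obj B \<Longrightarrow> scalar c \<Longrightarrow> idt A \<otimes> scal B c = scal (A \<odot> B) c"
proof -
  assume a: "obj A" "obj B" "scalar c"
  have k: "runit (A \<odot> B) = (idt A \<otimes> runit B) \<cdot> assoc A B tt" using runit_tensor a by simp
  have ki: "inv\<^sub>C (runit (A \<odot> B)) = inv\<^sub>C (assoc A B tt) \<cdot> (idt A \<otimes> inv\<^sub>C (runit B))"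
    using a unfolding k by simp
  have n: "assoc A B tt \<cdot> (idt (A \<odot> B) \<otimes> c) = (idt A \<otimes> (idt B \<otimes> c)) \<cdot> assoc A B tt"
    using assoc_natural[of "idt A" "idt B" c A B tt] a by simp
  show ?thesis unfolding scal_def k ki using a by (simp add: n comp_reduce2[OF n])
qed

lemma scal_tensor_idt: "obj A \<Longrightarrow> obj B \<Longrightarrow> scalar c \<Longrightarrow> scal A c \<otimes> idt B = scal (A \<odot> B) c"
proof -
  assume a: "obj A" "obj B" "scalar c"
  have s1: "symm A B \<cdot> scal (A \<odot> B) c = scal (B \<odot> A) c \<cdot> symm A B"
    using scal_natural[of "symm A B" "(A \<odot> B)" "(B \<odot> A)" c] a by simp
  have s2: "symm B A \<cdot> (idt B \<otimes> scal A c) = (scal A c \<otimes> idt B) \<cdot> symm B A"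
    using symm_natural[of "idt B" "scal A c" B A] a by simp
  have "scal (A \<odot> B) c = symm B A \<cdot> (symm A B \<cdot> scal (A \<odot> B) c)" using a by simp
  also have "\<dots> = symm B A \<cdot> ((idt B \<otimes> scal A c) \<cdot> symm A B)"
    unfolding s1 tensor_idt_scal[OF a(2) a(1) a(3)] by simp
  also have "\<dots> = scal A c \<otimes> idt B"
    using a by (simp del: tensor_comp tensor_comp_reduce add: s2 comp_reduce2[OF s2])
  finally show ?thesis by simp
qed

lemma veeA_barA_scal: "obj B \<Longrightarrow> obj D \<Longrightarrow> scalar c \<Longrightarrow> veeA (barA (scal B c)) (idt D) =
    scal (vee (bar B) D) c"
proof -
  assume a: "obj B" "obj D" "scalar c"
  define H where "H = vee (bar B) D"
  have obH: "obj H" unfolding H_def using a by simp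
  have e1: "ev C B D \<cdot> (idt H \<otimes> scal B c) = ev C B D \<cdot> (scal H c \<otimes> idt B)"
    using tensor_idt_scal[of H B c] scal_tensor_idt[of H B c] obH a by simp
  have c1: "Cur C H B D (ev C B D \<cdot> (idt H \<otimes> scal B c)) =
      veeA (barA (scal B c)) (idt D) \<cdot> Cur C H B D (ev C B D)"
    using Cur_comp_tensor_right[of "scal B c" "ev C B D" B H D] a obH unfolding H_def by (simp del: Vee_def VeeA_def)
  have c2: "Cur C H B D (ev C B D \<cdot> (scal H c \<otimes> idt B)) = Cur C H B D (ev C B D) \<cdot> scal H c"
    using Cur_comp_right[of "scal H c" "ev C B D" H B D] a obH unfolding H_def by (simp del: Vee_def VeeA_def)
  have ce: "Cur C H B D (ev C B D) = idt H" unfolding H_def using Cur_ev a by simp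
  show ?thesis using c1 c2 ce e1 a obH unfolding H_def by (simp del: Vee_def VeeA_def)
qed

lemma barA_barA_scal_tt: "scalar c \<Longrightarrow> barA (barA (scal tt c)) = scal (bar ff) c"
proof -
  assume c: "scalar c"
  have "scal tt c \<cdot> dneg tt = dneg tt \<cdot> scal (bar ff) c"
    using scal_natural[of "dneg tt" "bar ff" tt c] c by simp
  moreover have "barA (barA (scal tt c)) = inv\<^sub>C (dneg tt) \<cdot> (scal tt c \<cdot> dneg tt)"
    using dneg_natural[of "scal tt c" tt] c by simp
  ultimately show ?thesis using c by simp
qed

lemma barA_scal: "obj Y \<Longrightarrow> scalar c \<Longrightarrow> barA (scal Y c) = scal (bar Y) c"
proof -
  assume a: "obj Y" "scalar c"
  define W where "W = (bar (bar Y) \<odot> bar ff)"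
  define w where "w = runit Y \<cdot> (dneg Y \<otimes> dneg tt)"
  have wt: "arr w" "dm w = W" "cd w = Y" "isiso C w" unfolding w_def W_def using a by simp_all
  have obW: "obj W" unfolding W_def using a by simp
  have sW: "barA (scal W c) = scal (bar W) c"
  proof -
    have "veeA (barA (scal tt c)) (idt (bar Y)) = scal (vee ff (bar Y)) c"
      using veeA_barA_scal[of tt "bar Y" c] a by simp
    then have "barA (idt (bar (bar Y)) \<otimes> barA (barA (scal tt c))) = scal (bar W) c"
      unfolding W_def using a by simp
    then show ?thesis unfolding barA_barA_scal_tt[OF a(2)] W_def using tensor_idt_scal[of "bar (bar Y)" "bar ff" c] a by simp
  qed
  have sY: "scal Y c = w \<cdot> (scal W c \<cdot> inv\<^sub>C w)"
  proof -
    have e: "w \<cdot> scal W c = scal Y c \<cdot> w" using scal_natural[of w W Y c] wt a obW by simp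
    show ?thesis using wt a obW by (simp add: comp_reduce2[OF e])
  qed
  have "barA (scal Y c) = barA (inv\<^sub>C w) \<cdot> (barA (scal W c) \<cdot> barA w)"
    unfolding sY using wt a obW by simp
  also have "\<dots> = barA (inv\<^sub>C w) \<cdot> (scal (bar W) c \<cdot> barA w)" unfolding sW ..
  also have "\<dots> = scal (bar Y) c \<cdot> (barA (inv\<^sub>C w) \<cdot> barA w)"
  proof -
    have e: "barA (inv\<^sub>C w) \<cdot> scal (bar W) c = scal (bar Y) c \<cdot> barA (inv\<^sub>C w)"
      using scal_natural[of "barA (inv\<^sub>C w)" "bar W" "bar Y" c] wt a obW by simp
    show ?thesis using wt a obW by (simp del: barA_comp_reduce(1) barA_comp_reduce(2) add: comp_reduce2[OF e])
  qed
  also have "\<dots> = scal (bar Y) c" using wt a by simp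
  finally show ?thesis .
qed

lemma endo_bar_tt_scal:
  assumes "arr u" "dm u = ff" "cd u = ff"
  obtains c where "scalar c" "u = scal ff c"
proof -
  obtain c where c: "scalar c" "barA c = u" using barA_full[of u tt tt] assms by auto
  have "u = barA (scal tt c)" using scal_tt[of c] c by simp
  also have "\<dots> = scal ff c" using barA_scal[of tt c] c by simp
  finally show thesis using c that by blast
qed

text \<open>In a *-autonomous category in the usual sense theta is the identity; here the double
  negation is only assumed to be natural, and the one instance that is needed, at t, is
  derived from single-mixedness (lemma theta_tt).\<close>

definition theta :: "'o \<Rightarrow> 'a" where
  "theta X = dneg (bar X) \<cdot> barA (dneg X)"

lemma arr_theta [simp]: "obj X \<Longrightarrow> arr (theta X)"
  and dm_theta [simp]: "obj X \<Longrightarrow> dm (theta X) = bar X"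
  and cd_theta [simp]: "obj X \<Longrightarrow> cd (theta X) = bar X"
  unfolding theta_def by simp_all

lemma theta_natural: "arr b \<Longrightarrow> dm b = X \<Longrightarrow> cd b = Y \<Longrightarrow> barA b \<cdot> theta Y = theta X \<cdot> barA b"
proof -
  assume a0: "arr b" "dm b = X" "cd b = Y"
  then have "obj X" "obj Y" by auto
  note a = a0 this
  have n1: "barA b \<cdot> dneg (bar Y) = dneg (bar X) \<cdot> barA (barA (barA b))"
    using dneg_natural[of "barA b" "bar X"] a by simp
  have n2: "b \<cdot> dneg X = dneg Y \<cdot> barA (barA b)" using dneg_natural[of b Y] a by simp
  have "barA b \<cdot> theta Y = dneg (bar X) \<cdot> barA (dneg Y \<cdot> barA (barA b))"
    unfolding theta_def using a by (simp add: n1 comp_reduce2[OF n1])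
  also have "\<dots> = dneg (bar X) \<cdot> barA (b \<cdot> dneg X)" unfolding n2 ..
  also have "\<dots> = theta X \<cdot> barA b" unfolding theta_def using a by simp
  finally show ?thesis .
qed

lemma theta_bar: "obj X \<Longrightarrow> theta (bar X) = barA (theta X)"
proof -
  assume a: "obj X"
  have n: "dneg X \<cdot> dneg (bar (bar X)) = dneg X \<cdot> barA (barA (dneg X))"
    using dneg_natural[of "dneg X" X] a by simp
  have "dneg (bar (bar X)) = barA (barA (dneg X))"
    using iso_cancel_left[of "dneg X" "dneg (bar (bar X))" "barA (barA (dneg X))"] n a by simp
  then show ?thesis unfolding theta_def using a by simp
qed

end

section \<open>Comonoids and the mix map\<close>

locale single_mixed_comonoid_category = star_autonomous_category C for C :: "('o, 'a) sacat" +
  assumes Dup_in_hom: "A \<in> Ob C \<Longrightarrow> Dup C A \<in> hom C A (Tn C A A)"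
    and Del_in_hom: "A \<in> Ob C \<Longrightarrow> Del C A \<in> hom C A (Tu C)"
    and Dup_cocomm: "A \<in> Ob C \<Longrightarrow> Cmp C (Sw C A A) (Dup C A) = Dup C A"
    and Del_counit: "A \<in> Ob C \<Longrightarrow> Cmp C (RU C A) (Cmp C (TnA C (IdA C A) (Del C A)) (Dup C A)) =
        IdA C A"
    and single_mixed: "single_mixed C"
begin

abbreviation dup where "dup A \<equiv> Dup C A"
abbreviation del where "del A \<equiv> Del C A"
abbreviation emix where "emix \<equiv> Del C ff"

lemma arr_dup [simp]: "obj A \<Longrightarrow> arr (dup A)"
  and dm_dup [simp]: "obj A \<Longrightarrow> dm (dup A) = A"
  and cd_dup [simp]: "obj A \<Longrightarrow> cd (dup A) = A \<odot> A"
  and arr_del [simp]: "obj A \<Longrightarrow> arr (del A)"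
  and dm_del [simp]: "obj A \<Longrightarrow> dm (del A) = A"
  and cd_del [simp]: "obj A \<Longrightarrow> cd (del A) = tt"
  using Dup_in_hom Del_in_hom by (simp_all add: hom_def)

lemma arr_Cou [simp]: "obj B \<Longrightarrow> arr (Cou C B)"
  and dm_Cou [simp]: "obj B \<Longrightarrow> dm (Cou C B) = ff"
  and cd_Cou [simp]: "obj B \<Longrightarrow> cd (Cou C B) = B"
  unfolding Cou_def by simp_all

lemma arr_Nab [simp]: "obj B \<Longrightarrow> arr (Nab C B)"
  and dm_Nab [simp]: "obj B \<Longrightarrow> dm (Nab C B) = vee B B"
  and cd_Nab [simp]: "obj B \<Longrightarrow> cd (Nab C B) = B"
  unfolding Nab_def by simp_all

lemma runit_counit: "obj A \<Longrightarrow> runit A \<cdot> ((idt A \<otimes> del A) \<cdot> dup A) = idt A" using Del_counit by simp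

lemma lunit_counit: "obj A \<Longrightarrow> lunit A \<cdot> ((del A \<otimes> idt A) \<cdot> dup A) = idt A"
proof -
  assume a: "obj A"
  have s: "symm A tt \<cdot> (idt A \<otimes> del A) = (del A \<otimes> idt A) \<cdot> symm A A"
    using symm_natural[of "idt A" "del A" A tt] a by simp
  have "lunit A \<cdot> ((del A \<otimes> idt A) \<cdot> dup A) = lunit A \<cdot> ((del A \<otimes> idt A) \<cdot> (symm A A \<cdot> dup A))"
    using Dup_cocomm a by simp
  also have "\<dots> = (lunit A \<cdot> symm A tt) \<cdot> ((idt A \<otimes> del A) \<cdot> dup A)"
    using a by (simp add: s[symmetric] comp_reduce2[OF s[symmetric]])
  also have "\<dots> = idt A" using a runit_counit by (simp add: runit_eq_lunit_symm[symmetric])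
  finally show ?thesis .
qed

lemma inv_runit_eq: "obj A \<Longrightarrow> inv\<^sub>C (runit A) = (idt A \<otimes> del A) \<cdot> dup A"
proof -
  assume a: "obj A"
  have "inv\<^sub>C (runit A) = inv\<^sub>C (runit A) \<cdot> (runit A \<cdot> ((idt A \<otimes> del A) \<cdot> dup A))"
    using runit_counit a by simp
  also have "\<dots> = (idt A \<otimes> del A) \<cdot> dup A" using a by simp
  finally show ?thesis .
qed

lemma inv_lunit_eq: "obj A \<Longrightarrow> inv\<^sub>C (lunit A) = (del A \<otimes> idt A) \<cdot> dup A"
proof -
  assume a: "obj A"
  have "inv\<^sub>C (lunit A) = inv\<^sub>C (lunit A) \<cdot> (lunit A \<cdot> ((del A \<otimes> idt A) \<cdot> dup A))"
    using lunit_counit a by simp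
  also have "\<dots> = (del A \<otimes> idt A) \<cdot> dup A" using a by simp
  finally show ?thesis .
qed

lemma emix_self_dual: "emix = dneg tt \<cdot> barA emix"
  using single_mixed unfolding single_mixed_def Cou_def by simp

definition pairing :: "'o \<Rightarrow> 'a" where
  "pairing A = ev C (bar A) ff \<cdot> ((veeA (inv\<^sub>C (dneg A)) (idt ff) \<cdot> inv\<^sub>C (RUv C A)) \<otimes> idt (bar A))"

lemma arr_pairing [simp]: "obj A \<Longrightarrow> arr (pairing A)"
  and dm_pairing [simp]: "obj A \<Longrightarrow> dm (pairing A) = A \<odot> bar A"
  and cd_pairing [simp]: "obj A \<Longrightarrow> cd (pairing A) = ff"
  unfolding pairing_def by simp_all

lemma Cur_pairing: "obj A \<Longrightarrow> Cur C A (bar A) ff (pairing A) =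
    veeA (inv\<^sub>C (dneg A)) (idt ff) \<cdot> inv\<^sub>C (RUv C A)"
proof -
  assume a: "obj A"
  let ?a = "veeA (inv\<^sub>C (dneg A)) (idt ff) \<cdot> inv\<^sub>C (RUv C A)"
  have "Cur C (dm ?a) (bar A) ff (ev C (bar A) ff \<cdot> (?a \<otimes> idt (bar A))) =
     Cur C (vee (bar (bar A)) ff) (bar A) ff (ev C (bar A) ff) \<cdot> ?a"
    by (rule Cur_comp_right) (use a in simp_all)
  also have "\<dots> = ?a" using Cur_ev[of "bar A" "ff"] a by simp
  finally show ?thesis unfolding pairing_def using a by simp
qed

definition mix_uncurried :: "'o \<Rightarrow> 'o \<Rightarrow> 'a" where
  "mix_uncurried A B = lunit B \<cdot> (((emix \<cdot> pairing A) \<otimes> idt B) \<cdot> shuffle A B (bar A))"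

lemma arr_mix_uncurried [simp]: "obj A \<Longrightarrow> obj B \<Longrightarrow> arr (mix_uncurried A B)"
  and dm_mix_uncurried [simp]: "obj A \<Longrightarrow> obj B \<Longrightarrow> dm (mix_uncurried A B) = (A \<odot> B) \<odot> bar A"
  and cd_mix_uncurried [simp]: "obj A \<Longrightarrow> obj B \<Longrightarrow> cd (mix_uncurried A B) = B"
  unfolding mix_uncurried_def by simp_all

lemma mix_eq_Cur:
  assumes A: "obj A" and B: "obj B"
  shows "mix C A B = veeA (dneg A) (idt B) \<cdot> Cur C (A \<odot> B) (bar A) B (mix_uncurried A B)"
proof -
  define k where "k = ((ev C (bar A) ff \<cdot> (veeA (inv\<^sub>C (dneg A)) (idt ff) \<otimes> idt (bar A))) \<otimes> idt B) \<cdot>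
    shuffle (vee A ff) B (bar A)"
  define h where "h = k \<cdot> ((inv\<^sub>C (RUv C A) \<otimes> idt B) \<otimes> idt (bar A))"
  define d where "d = lunit B \<cdot> (emix \<otimes> idt B)"
  have k: "arr k" "dm k = (vee A ff \<odot> B) \<odot> bar A" "cd k = ff \<odot> B"
    unfolding k_def using A B by simp_all
  have h: "arr h" "dm h = (A \<odot> B) \<odot> bar A" "cd h = ff \<odot> B"
    unfolding h_def using A B k by simp_all
  have d: "arr d" "dm d = ff \<odot> B" "cd d = B"
    unfolding d_def using B by simp_all
  have sn: "shuffle (vee A ff) B (bar A) \<cdot> ((inv\<^sub>C (RUv C A) \<otimes> idt B) \<otimes> idt (bar A)) =
      ((inv\<^sub>C (RUv C A) \<otimes> idt (bar A)) \<otimes> idt B) \<cdot> shuffle A B (bar A)"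
    using shuffle_natural[of "inv\<^sub>C (RUv C A)" "idt B" "idt (bar A)" "vee A ff" B "bar A"] A B by simp
  have "mix C A B = veeA (idt A) d \<cdot> (veeA (dneg A) (idt (ff \<odot> B)) \<cdot>
      (Cur C (vee A ff \<odot> B) (bar A) (ff \<odot> B) k \<cdot> (inv\<^sub>C (RUv C A) \<otimes> idt B)))"
    unfolding mix_def switch_def Let_def d_def using A B k
    by (simp add: k_def shuffle_def)
  also have "\<dots> = veeA (idt A) d \<cdot> (veeA (dneg A) (idt (ff \<odot> B)) \<cdot> Cur C (A \<odot> B) (bar A) (ff \<odot> B) h)"
    unfolding h_def using Cur_comp_right[of "inv\<^sub>C (RUv C A) \<otimes> idt B" k] A B k by simp
  also have "\<dots> =
      veeA (dneg A) (idt B) \<cdot> (veeA (idt (bar (bar A))) d \<cdot> Cur C (A \<odot> B) (bar A) (ff \<odot> B) h)"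
    using A B d h by simp
  also have "\<dots> = veeA (dneg A) (idt B) \<cdot> Cur C (A \<odot> B) (bar A) B (d \<cdot> h)"
    using Cur_comp_left[of d h "ff \<odot> B" "A \<odot> B" "bar A"] A B d h by simp
  also have "d \<cdot> h = mix_uncurried A B"
    unfolding d_def h_def k_def mix_uncurried_def pairing_def using A B
    by (simp add: sn[unfolded Vee_def Fo_def] comp_reduce2[OF sn[unfolded Vee_def Fo_def]])
  finally show ?thesis .
qed

lemma arr_mix [simp]: "obj A \<Longrightarrow> obj B \<Longrightarrow> arr (mix C A B)"
  and dm_mix [simp]: "obj A \<Longrightarrow> obj B \<Longrightarrow> dm (mix C A B) = A \<odot> B"
  and cd_mix [simp]: "obj A \<Longrightarrow> obj B \<Longrightarrow> cd (mix C A B) = vee A B"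
  by (simp_all add: mix_eq_Cur del: Vee_def VeeA_def)

lemma pairing_dinatural:
  assumes x: "arr x" "dm x = A" "cd x = A'"
  shows "pairing A \<cdot> (idt A \<otimes> barA x) = pairing A' \<cdot> (x \<otimes> idt (bar A'))"
proof -
  have obj: "obj A" "obj A'" using x by auto
  have r: "RUv C A' \<cdot> veeA x (idt ff) = x \<cdot> RUv C A" using RUv_natural x by blast
  have r': "inv\<^sub>C (RUv C A') \<cdot> x = veeA x (idt ff) \<cdot> inv\<^sub>C (RUv C A)"
    by (rule inv_natural) (use x obj r in simp_all)
  have r'': "inv\<^sub>C (RUv C A') \<cdot> x = barA (idt (bar ff) \<otimes> barA x) \<cdot> inv\<^sub>C (RUv C A)" using r' by simp
  have dni: "inv\<^sub>C (dneg A') \<cdot> x = barA (barA x) \<cdot> inv\<^sub>C (dneg A)" using inv_dneg_natural x by simp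
  have c1: "Cur C A (bar A') ff (pairing A \<cdot> (idt A \<otimes> barA x)) =
      veeA (barA (barA x)) (idt ff) \<cdot> Cur C A (bar A) ff (pairing A)"
    using Cur_comp_tensor_right[of "barA x" "pairing A" "bar A" A "ff"] x obj by simp
  have c2: "Cur C A (bar A') ff (pairing A' \<cdot> (x \<otimes> idt (bar A'))) =
      Cur C A' (bar A') ff (pairing A') \<cdot> x"
    using Cur_comp_right[of x "pairing A'" A' "bar A'" "ff"] x obj by simp
  have "Cur C A (bar A') ff (pairing A \<cdot> (idt A \<otimes> barA x)) =
      Cur C A (bar A') ff (pairing A' \<cdot> (x \<otimes> idt (bar A')))"
    unfolding c1 c2 Cur_pairing[OF obj(1)] Cur_pairing[OF obj(2)] using x obj
    by (simp add: r'' comp_reduce2[OF r''] dni)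
  then show ?thesis using Cur_inject[of "pairing A \<cdot> (idt A \<otimes> barA x)" "pairing A' \<cdot> (x \<otimes> idt (bar A'))" A "bar A'" "ff"] x obj
    by simp
qed

section \<open>The unit laws of the sum\<close>

lemma shuffle_counit:
  assumes f: "arr f" "dm f = A" "cd f = tt" and W: "obj W"
  shows "shuffle tt tt W \<cdot> (((f \<otimes> del A) \<cdot> dup A) \<otimes> idt W) =
      ((f \<otimes> idt W) \<otimes> del A) \<cdot> (shuffle A A W \<cdot> (dup A \<otimes> idt W))"
proof -
  have obj: "obj A" using f by auto
  have e: "((f \<otimes> del A) \<cdot> dup A) \<otimes> idt W = ((f \<otimes> del A) \<otimes> idt W) \<cdot> (dup A \<otimes> idt W)"
    using f obj W by simp
  have n: "shuffle tt tt W \<cdot> ((f \<otimes> del A) \<otimes> idt W) = ((f \<otimes> idt W) \<otimes> del A) \<cdot> shuffle A A W"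
    using shuffle_natural[of f "del A" "idt W" tt tt W] f obj W by simp
  show ?thesis unfolding e using f obj W by (simp del: tensor_comp tensor_comp_reduce add: n comp_reduce2[OF n])
qed

lemma shuffle_runit_cancel_comp:
  assumes "arr G" "dm G = (tt \<odot> W)" "cd G = tt" "obj W" "arr f" "cd f = tt"
  shows "lunit tt \<cdot> ((G \<otimes> idt tt) \<cdot> (shuffle tt tt W \<cdot> ((inv\<^sub>C (runit tt) \<cdot> f) \<otimes> idt W))) =
      G \<cdot> (f \<otimes> idt W)"
proof -
  have c: "lunit tt \<cdot> ((G \<otimes> idt tt) \<cdot> (shuffle tt tt W \<cdot> (inv\<^sub>C (runit tt) \<otimes> idt W))) = G"
    using shuffle_runit_cancel[of G tt W] assms by simp
  have e: "(inv\<^sub>C (runit tt) \<cdot> f) \<otimes> idt W = (inv\<^sub>C (runit tt) \<otimes> idt W) \<cdot> (f \<otimes> idt W)"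
    using assms by simp
  have "lunit tt \<cdot> ((G \<otimes> idt tt) \<cdot> (shuffle tt tt W \<cdot> ((inv\<^sub>C (runit tt) \<cdot> f) \<otimes> idt W))) =
      (lunit tt \<cdot> ((G \<otimes> idt tt) \<cdot> (shuffle tt tt W \<cdot> (inv\<^sub>C (runit tt) \<otimes> idt W)))) \<cdot> (f \<otimes> idt W)"
    unfolding e using assms by (simp del: tensor_comp tensor_comp_reduce)
  then show ?thesis using c by simp
qed

lemma tensor_del_comp_dup:
  assumes "arr f" "dm f = A" "cd f = tt"
  shows "(f \<otimes> del A) \<cdot> dup A = inv\<^sub>C (runit tt) \<cdot> f"
proof -
  have A: "obj A" using assms by auto
  have "(f \<otimes> del A) \<cdot> dup A = (f \<otimes> idt tt) \<cdot> ((idt A \<otimes> del A) \<cdot> dup A)" using assms A by simp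
  also have "\<dots> = (f \<otimes> idt tt) \<cdot> inv\<^sub>C (runit A)" using inv_runit_eq A by simp
  also have "\<dots> = inv\<^sub>C (runit tt) \<cdot> f" using inv_runit_natural[of f tt] assms by simp
  finally show ?thesis .
qed

lemma del_mix_uncurried_dup:
  assumes f: "arr f" "dm f = A" "cd f = tt"
  shows "del A \<cdot> (mix_uncurried A A \<cdot> (dup A \<otimes> barA f)) = emix \<cdot> (pairing tt \<cdot> (f \<otimes> idt ff))"
proof -
  have A: "obj A" using f by auto
  define G where "G = emix \<cdot> pairing tt"
  have G: "arr G" "dm G = tt \<odot> ff" "cd G = tt" unfolding G_def by simp_all
  have ln: "del A \<cdot> lunit A = lunit tt \<cdot> (idt tt \<otimes> del A)"
    using lunit_natural[of "del A"] A by simp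
  have sn: "shuffle A A (bar A) \<cdot> (idt (A \<odot> A) \<otimes> barA f) =
      ((idt A \<otimes> barA f) \<otimes> idt A) \<cdot> shuffle A A ff"
    using shuffle_natural[of "idt A" "idt A" "barA f" A A "bar A"] f A by simp
  have pn: "pairing A \<cdot> (idt A \<otimes> barA f) = pairing tt \<cdot> (f \<otimes> idt ff)"
    using pairing_dinatural[OF f] by simp
  have "del A \<cdot> (mix_uncurried A A \<cdot> (dup A \<otimes> barA f)) =
      (del A \<cdot> (mix_uncurried A A \<cdot> (idt (A \<odot> A) \<otimes> barA f))) \<cdot> (dup A \<otimes> idt ff)"
    using f A by simp
  also have "\<dots> = lunit tt \<cdot> ((G \<otimes> idt tt) \<cdot>
      (((f \<otimes> idt ff) \<otimes> del A) \<cdot> (shuffle A A ff \<cdot> (dup A \<otimes> idt ff))))"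
    unfolding mix_uncurried_def G_def using f A
    by (simp add: ln comp_reduce2[OF ln] sn comp_reduce2[OF sn] pn)
  also have "\<dots> = lunit tt \<cdot> ((G \<otimes> idt tt) \<cdot> (shuffle tt tt ff \<cdot> (((f \<otimes> del A) \<cdot> dup A) \<otimes> idt ff)))"
    using shuffle_counit[OF f] by simp
  also have "\<dots> = G \<cdot> (f \<otimes> idt ff)"
    unfolding tensor_del_comp_dup[OF f] using shuffle_runit_cancel_comp[of G "ff" f] G f by simp
  finally show ?thesis unfolding G_def using f by simp
qed

lemma Nab_emix_RUv:
  "Nab C tt \<cdot> (veeA (dneg tt) (idt tt) \<cdot> (veeA (idt (bar ff)) emix \<cdot>
    (veeA (inv\<^sub>C (dneg tt)) (idt ff) \<cdot> inv\<^sub>C (RUv C tt)))) = idt tt"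
  unfolding Nab_def RUv_def by (simp add: emix_self_dual[symmetric] lunit_counit)

theorem plus_Del_neutral:
  assumes f: "arr f" "dm f = A" "cd f = tt"
  shows "plus C f (del A) = f"
proof -
  have A: "obj A" using f by auto
  define H where "H = del A \<cdot> (mix_uncurried A A \<cdot> (idt (A \<odot> A) \<otimes> barA f))"
  have H: "arr H" "dm H = (A \<odot> A) \<odot> ff" "cd H = tt" unfolding H_def using f A by simp_all
  have "Cur C (A \<odot> A) ff tt H =
      veeA (barA (barA f)) (del A) \<cdot> Cur C (A \<odot> A) (bar A) A (mix_uncurried A A)"
    using Cur_natural'[of "idt (A \<odot> A)" "barA f" "del A" "mix_uncurried A A" "A \<odot> A" "bar A" A] f A
    unfolding H_def by (simp del: Vee_def VeeA_def)
  then have mix: "veeA f (del A) \<cdot> mix C A A = veeA (dneg tt) (idt tt) \<cdot> Cur C (A \<odot> A) ff tt H"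
    unfolding mix_eq_Cur[OF A A] using f A dneg_natural[OF f(1) f(3)] by simp
  have "H \<cdot> (dup A \<otimes> idt ff) = emix \<cdot> (pairing tt \<cdot> (f \<otimes> idt ff))"
    unfolding H_def using f A del_mix_uncurried_dup[OF f] by simp
  then have "Cur C (A \<odot> A) ff tt H \<cdot> dup A = Cur C A ff tt (emix \<cdot> (pairing tt \<cdot> (f \<otimes> idt ff)))"
    using Cur_comp_right[of "dup A" H "A \<odot> A" "ff" tt] H A by simp
  also have "\<dots> = veeA (idt (bar ff)) emix \<cdot> (Cur C tt ff ff (pairing tt) \<cdot> f)"
    using Cur_natural'[of f "idt ff" emix "pairing tt" tt "ff" "ff"] f
    by (simp del: Vee_def VeeA_def)
  finally have "veeA f (del A) \<cdot> (mix C A A \<cdot> dup A) = veeA (dneg tt) (idt tt) \<cdot>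
      (veeA (idt (bar ff)) emix \<cdot> (Cur C tt ff ff (pairing tt) \<cdot> f))"
    using comp_reduce[OF mix, of "dup A"] f A H by (simp del: Vee_def VeeA_def)
  then have "plus C f (del A) = Nab C tt \<cdot> (veeA (dneg tt) (idt tt) \<cdot> (veeA (idt (bar ff)) emix \<cdot>
      (veeA (inv\<^sub>C (dneg tt)) (idt ff) \<cdot> (inv\<^sub>C (RUv C tt) \<cdot> f))))"
    unfolding plus_def Cur_pairing[OF obj_tt] using f A by (simp del: Vee_def VeeA_def)
  also have "\<dots> = f"
    using comp_reduce3[OF Nab_emix_RUv, of f] f by (simp del: Vee_def VeeA_def)
  finally show ?thesis .
qed

lemma emix_theta: "emix \<cdot> theta tt = emix"
proof -
  have barA_emix: "barA emix = inv\<^sub>C (dneg tt) \<cdot> emix"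
  proof -
    have "inv\<^sub>C (dneg tt) \<cdot> emix = inv\<^sub>C (dneg tt) \<cdot> (dneg tt \<cdot> barA emix)"
      using emix_self_dual by simp
    also have "\<dots> = barA emix" by simp
    finally show ?thesis by simp
  qed
  have dual: "dneg tt \<cdot> barA emix = emix" using emix_self_dual by simp
  have e1: "emix \<cdot> dneg ff = emix \<cdot> barA (inv\<^sub>C (dneg tt))"
  proof -
    have "emix \<cdot> dneg ff = dneg tt \<cdot> barA (barA emix)" using dneg_natural[of emix tt] by simp
    also have "\<dots> = dneg tt \<cdot> barA (inv\<^sub>C (dneg tt) \<cdot> emix)" unfolding barA_emix[symmetric] ..
    also have "\<dots> = dneg tt \<cdot> (barA emix \<cdot> barA (inv\<^sub>C (dneg tt)))"
      using barA_comp[of emix "inv\<^sub>C (dneg tt)"] by simp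
    also have "\<dots> = emix \<cdot> barA (inv\<^sub>C (dneg tt))"
      by (simp del: barA_comp_reduce(1) barA_comp_reduce(2) add: comp_reduce[OF dual])
    finally show ?thesis .
  qed
  show ?thesis unfolding theta_def by (simp add: e1 comp_reduce2[OF e1])
qed

lemma theta_tt: "theta tt = idt ff"
proof -
  obtain c where c: "scalar c" "theta tt = scal ff c" using endo_bar_tt_scal[of "theta tt"] by auto
  have ce: "c \<cdot> emix = emix"
  proof -
    have "c \<cdot> emix = scal tt c \<cdot> emix" using scal_tt c by simp
    also have "\<dots> = emix \<cdot> scal ff c" using scal_natural[of emix "ff" tt c] c by simp
    also have "\<dots> = emix" using emix_theta c by simp
    finally show ?thesis .
  qed
  have "scal ff c = scal ff c \<cdot> (runit ff \<cdot> ((idt ff \<otimes> emix) \<cdot> dup ff))"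
    using runit_counit[of "ff"] c by simp
  also have "\<dots> = runit ff \<cdot> ((idt ff \<otimes> (c \<cdot> emix)) \<cdot> dup ff)" unfolding scal_def using c by simp
  also have "\<dots> = idt ff" unfolding ce using runit_counit[of "ff"] by simp
  finally show ?thesis using c by simp
qed

lemma del_theta: "obj B \<Longrightarrow> del (bar B) \<cdot> theta B = del (bar B)"
proof -
  assume B: "obj B"
  obtain b where b: "arr b" "dm b = ff" "cd b = B" "barA b = inv\<^sub>C (dneg tt) \<cdot> del (bar B)"
    using barA_full[of "inv\<^sub>C (dneg tt) \<cdot> del (bar B)" B "ff"] B by auto
  have n: "barA b \<cdot> theta B = theta ff \<cdot> barA b" using theta_natural b by blast
  have thN: "theta ff = idt (bar ff)" using theta_bar[of tt] theta_tt by simp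
  have "inv\<^sub>C (dneg tt) \<cdot> (del (bar B) \<cdot> theta B) = inv\<^sub>C (dneg tt) \<cdot> del (bar B)"
    using n unfolding thN b(4) using B by simp
  then show ?thesis using iso_cancel_left[of "inv\<^sub>C (dneg tt)" "del (bar B) \<cdot> theta B" "del (bar B)"] B by simp
qed

lemma barA_Cou: "obj B \<Longrightarrow> barA (Cou C B) = inv\<^sub>C (dneg tt) \<cdot> del (bar B)"
proof -
  assume B: "obj B"
  have nn: "barA (barA (del (bar B))) = inv\<^sub>C (dneg tt) \<cdot> (del (bar B) \<cdot> dneg (bar B))"
    using dneg_natural[of "del (bar B)" tt] B by simp
  have "barA (Cou C B) = barA (barA (del (bar B))) \<cdot> barA (dneg B)"
    unfolding Cou_def using barA_comp[of "barA (del (bar B))" "dneg B"] B by simp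
  also have "\<dots> = inv\<^sub>C (dneg tt) \<cdot> (del (bar B) \<cdot> theta B)" unfolding nn theta_def using B by simp
  also have "\<dots> = inv\<^sub>C (dneg tt) \<cdot> del (bar B)" using del_theta B by simp
  finally show ?thesis .
qed

lemma Nab_veeA_Cou: "obj B \<Longrightarrow> Nab C B \<cdot> veeA (idt B) (Cou C B) = RUv C B"
  unfolding Nab_def RUv_def by (simp add: barA_Cou inv_lunit_eq)

text \<open>The endomorphism of f obtained from the pairing of f is a scalar, so the pairing
  factors through the right unit; this is what lets the counit law absorb the copy made by
  dup.\<close>

lemma mix_uncurried_ff_dup: "mix_uncurried ff ff \<cdot> (dup ff \<otimes> idt (bar ff)) = pairing ff"
proof -
  have obF: "obj ff" "obj (bar ff)" by simp_all
  define u where "u = pairing ff \<cdot> ((idt ff \<otimes> inv\<^sub>C (dneg tt)) \<cdot> inv\<^sub>C (runit ff))"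
  have ut: "arr u" "dm u = ff" "cd u = ff" unfolding u_def  by simp_all
  obtain c where c: "scalar c" "u = scal ff c" using endo_bar_tt_scal[OF ut] by auto
  define w where "w = c \<cdot> dneg tt"
  have wt: "arr w" "dm w = (bar ff)" "cd w = tt" unfolding w_def   using c by simp_all
  have EPS: "pairing ff = runit ff \<cdot> (idt ff \<otimes> w)"
  proof -
    have "pairing ff = u \<cdot> (runit ff \<cdot> (idt ff \<otimes> dneg tt))" unfolding u_def  by simp
    also have "\<dots> = runit ff \<cdot> (idt ff \<otimes> w)" unfolding c(2) scal_def w_def  using c by simp
    finally show ?thesis .
  qed
  have en: "emix \<cdot> runit ff = runit tt \<cdot> (emix \<otimes> idt tt)" using runit_natural[of emix] by simp
  have sn: "shuffle tt ff tt \<cdot> ((emix \<otimes> idt ff) \<otimes> w) =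
      ((emix \<otimes> w) \<otimes> idt ff) \<cdot> shuffle ff ff (bar ff)"
    using shuffle_natural[of emix "idt ff" w tt "ff" tt] wt obF  by simp
  have c2: "lunit ff \<cdot> ((runit tt \<otimes> idt ff) \<cdot> shuffle tt ff tt) = runit ff \<cdot> (lunit ff \<otimes> idt tt)"
    using shuffle_unit_unit obF by simp
  have "mix_uncurried ff ff \<cdot> (dup ff \<otimes> idt (bar ff)) =
      lunit ff \<cdot> (((runit tt \<cdot> (emix \<otimes> w)) \<otimes> idt ff) \<cdot> (shuffle ff ff (bar ff) \<cdot> (dup ff \<otimes> idt (bar ff))))"
    unfolding mix_uncurried_def EPS using obF wt by (simp add: en comp_reduce2[OF en])
  also have "\<dots> =
      lunit ff \<cdot> ((runit tt \<otimes> idt ff) \<cdot> (((emix \<otimes> w) \<otimes> idt ff) \<cdot> (shuffle ff ff (bar ff) \<cdot> (dup ff \<otimes> idt (bar ff)))))"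
    using obF wt by simp
  also have "\<dots> =
      lunit ff \<cdot> ((runit tt \<otimes> idt ff) \<cdot> (shuffle tt ff tt \<cdot> (((emix \<otimes> idt ff) \<otimes> w) \<cdot> (dup ff \<otimes> idt (bar ff)))))"
    using obF wt by (simp del: tensor_comp tensor_comp_reduce add: sn[symmetric] comp_reduce2[OF sn[symmetric]])
  also have "\<dots> =
      runit ff \<cdot> ((lunit ff \<otimes> idt tt) \<cdot> (((emix \<otimes> idt ff) \<otimes> w) \<cdot> (dup ff \<otimes> idt (bar ff))))"
    using obF wt by (simp del: tensor_comp tensor_comp_reduce add: comp_reduce3[OF c2])
  also have "\<dots> = runit ff \<cdot> (idt ff \<otimes> w)" using obF wt lunit_counit[of "ff"]  by simp
  also have "\<dots> = pairing ff" using EPS by simp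
  finally show ?thesis  .
qed

lemma RUv_mix_dup_ff: "RUv C ff \<cdot> (mix C ff ff \<cdot> dup ff) = idt ff"
proof -
  have obF: "obj ff" by simp
  define c0 where "c0 = Cur C (ff \<odot> ff) (bar ff) ff (mix_uncurried ff ff)"
  have c0t: "arr c0" "dm c0 = (ff \<odot> ff)" "cd c0 = vee (bar (bar ff)) ff"
    unfolding c0_def using obF by (simp_all del: Vee_def)
  have m: "mix C ff ff = veeA (dneg ff) (idt ff) \<cdot> c0" unfolding c0_def using mix_eq_Cur obF by simp
  have ca: "c0 \<cdot> dup ff = Cur C ff (bar ff) ff (mix_uncurried ff ff \<cdot> (dup ff \<otimes> idt (bar ff)))"
    unfolding c0_def using Cur_comp_right[of "dup ff" "mix_uncurried ff ff" "(ff \<odot> ff)" "bar ff" "ff"] obF by simp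
  have ce: "Cur C ff (bar ff) ff (mix_uncurried ff ff \<cdot> (dup ff \<otimes> idt (bar ff))) =
      veeA (inv\<^sub>C (dneg ff)) (idt ff) \<cdot> inv\<^sub>C (RUv C ff)"
    using mix_uncurried_ff_dup Cur_pairing[of "ff"] obF  by simp
  have "RUv C ff \<cdot> (mix C ff ff \<cdot> dup ff) = RUv C ff \<cdot> (veeA (dneg ff) (idt ff) \<cdot> (c0 \<cdot> dup ff))"
    unfolding m using obF c0t by (simp del: Vee_def VeeA_def)
  also have "\<dots> = idt ff" unfolding ca ce using obF by simp
  finally show ?thesis  .
qed

theorem plus_Cou_neutral:
  assumes g: "arr g" "dm g = ff" "cd g = B"
  shows "plus C g (Cou C B) = g"
proof -
  have B: "obj B" using g by auto
  define R where "R = mix C ff ff \<cdot> dup ff"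
  have obt: "obj ff" by simp
  have Rt: "arr R" "dm R = ff" "cd R = vee ff ff" unfolding R_def mix_eq_Cur[OF obt obt]
    by (simp_all del: Vee_def VeeA_def)
  have v: "veeA g (Cou C B) = veeA (idt B) (Cou C B) \<cdot> veeA g (idt ff)" using g B by simp
  have U: "Nab C B \<cdot> veeA (idt B) (Cou C B) = RUv C B" using Nab_veeA_Cou B by simp
  have rn: "RUv C B \<cdot> veeA g (idt ff) = g \<cdot> RUv C ff" using RUv_natural[of g "ff" B] g by simp
  have "plus C g (Cou C B) = Nab C B \<cdot> (veeA g (Cou C B) \<cdot> R)"
    unfolding plus_def R_def using g by simp
  also have "\<dots> = Nab C B \<cdot> (veeA (idt B) (Cou C B) \<cdot> (veeA g (idt ff) \<cdot> R))"
    unfolding v using g B Rt by (simp del: Vee_def VeeA_def)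
  also have "\<dots> = g \<cdot> (RUv C ff \<cdot> R)"
    using g B Rt by (simp del: Vee_def VeeA_def add: comp_reduce[OF U] comp_reduce2[OF rn])
  also have "\<dots> = g" unfolding R_def RUv_mix_dup_ff using g by simp
  finally show ?thesis .
qed

end

theorem proposition5:
  fixes C :: "('o, 'a) sacat" and F :: "'o \<Rightarrow> 'b::boolean_algebra"
  assumes "B1_category C F"
    and "single_mixed C"
    and "Del C (Tu C) = IdA C (Tu C)"
  shows "(\<forall>A f. f \<in> hom C A (Tu C) \<longrightarrow> plus C f (Del C A) = f) \<and>
         (\<forall>B g. g \<in> hom C (Fo C) B \<longrightarrow> plus C g (Cou C B) = g)"
proof -
  interpret single_mixed_comonoid_category C
    using assms(1,2) unfolding B1_category_def by unfold_locales blast+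
  show ?thesis
    using plus_Del_neutral plus_Cou_neutral by (auto simp: hom_def)
qed

end
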